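(* In the general setting of the context, assume $\mathbf j(\phi,\mathbf 0)=\mathbf 0$ for all $\phi$ and $\frac{\partial\mathbf j}{\partial\boldsymbol\mu}(\phi,\mathbf 0)$ is symmetric positive definite for all $\phi$. Let $\mathcal C_r=\{(\mathbf c,v,\phi)\in\mathbb R^{N+2}:|\mathbf c-\mathbf c^{\rm e}|<r,\ |\phi|<r\}$. There are constants $K_\alpha>0$ and $K>0$ such that for every $|\alpha|<K_\alpha$: (1) $\mathcal C_K\cap\Gamma_\alpha$ is an $N$-dimensional submanifold of $\mathbb R^{N+2}$, and every $\mathbf y\in\mathcal C_K\cap\Gamma_\alpha$ can be written $\mathbf y=(\mathbf c,v,\Phi(\mathbf c,\alpha))$, where $\Phi$ is a $C^1$ function of $(\mathbf c,\alpha)$; (2) for every $\mathbf y^0=(\mathbf c^0,v^0,\phi^0)\in\mathcal C_K\cap\Gamma_\alpha$ the general pump-leak system has a unique solution with initial value $\mathbf y^0$ for short times, and for short times $\phi(t)=\Phi(\mathbf c(t),\alpha)$.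
   Context: Fix $N\ge2$, real valences $z_1,\dots,z_N$ not all zero, $\mathbf z=(z_k)$, positive constants $c_k^{\rm e}$ with $\sum_kz_kc_k^{\rm e}=0$, $\mathbf c^{\rm e}=(c_k^{\rm e})$, $A>0$, $z\in\mathbb R$, and a parameter $\alpha\in\mathbb R$. For $\mathbf c\in(0,\infty)^N$, $v>0$, $\phi\in\mathbb R$ set $\mu_k=\ln(c_k/c_k^{\rm e})+z_k\phi$, $\boldsymbol\mu=(\mu_k)$, $\pi_{\rm w}=\sum_kc_k^{\rm e}-(\sum_kc_k+A/v)$. Let $\mathbf j:\mathbb R\times\mathbb R^N\to\mathbb R^N$, $(\phi,\boldsymbol\mu)\mapsto\mathbf j(\phi,\boldsymbol\mu)$, $\mathbf p:\mathbb R\times(0,\infty)^N\to\mathbb R^N$, $(\phi,\mathbf c)\mapsto\mathbf p(\phi,\mathbf c)$, $j_{\rm w}:\mathbb R\to\mathbb R$ be $C^1$; $\partial\mathbf j/\partial\boldsymbol\mu$ denotes the Jacobian in $\boldsymbol\mu$ at fixed $\phi$. The general pump-leak system is $\frac{d}{dt}(v\mathbf c)=-\mathbf j(\phi,\boldsymbol\mu)-\alpha\mathbf p(\phi,\mathbf c)$, $0=\sum_kz_kc_k+zA/v$, $\frac{dv}{dt}=-j_{\rm w}(\pi_{\rm w})$. Let $Q(\mathbf c,v)=\sum_kz_kc_k+zA/v$, $I_\alpha(\mathbf c,\phi)=\langle\mathbf z,\mathbf j+\alpha\mathbf p\rangle_{\mathbb R^N}$, $\Gamma_\alpha=\{(\mathbf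 c,v,\phi)\in(0,\infty)^N\times(0,\infty)\times\mathbb R:Q=0,\ I_\alpha=0\}$. A solution with initial value $\mathbf y^0\in\Gamma_\alpha$ is $(\mathbf c(t),v(t),\phi(t))$, $t\in[0,T)$, with $\mathbf c,v$ of class $C^1$, $\phi$ continuous, satisfying the system and the initial condition. *)

theory Defs
  imports "HOL-Analysis.Analysis"
begin

definition C1_on :: "'a::real_normed_vector set \<Rightarrow> ('a \<Rightarrow> 'b::real_normed_vector) \<Rightarrow> bool" where
  "C1_on S f \<longleftrightarrow> (\<exists>f'. (\<forall>x\<in>S. (f has_derivative blinfun_apply (f' x)) (at x)) \<and> continuous_on S f')"

definition submanifold_dim :: "'k::euclidean_space itself \<Rightarrow> 'a::euclidean_space set \<Rightarrow> bool" where
  "submanifold_dim (_::'k itself) M \<longleftrightarrow>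
     (\<forall>x\<in>M. \<exists>U (W::'k set) \<psi> g. open U \<and> x \<in> U \<and> open W \<and> C1_on W \<psi> \<and>
        (\<forall>w\<in>W. inj (frechet_derivative \<psi> (at w))) \<and> homeomorphism W (M \<inter> U) \<psi> g)"

definition pos_vec :: "real^'n \<Rightarrow> bool" where
  "pos_vec c \<longleftrightarrow> (\<forall>k. 0 < c $ k)"

definition mu :: "real^'n \<Rightarrow> real^'n \<Rightarrow> real^'n \<Rightarrow> real \<Rightarrow> real^'n" where
  "mu z ce c \<phi> = (\<chi> k. ln (c $ k / ce $ k) + z $ k * \<phi>)"

definition pi_w :: "real^'n \<Rightarrow> real \<Rightarrow> real^'n \<Rightarrow> real \<Rightarrow> real" where
  "pi_w ce A c v = (\<Sum>k\<in>UNIV. ce $ k) - ((\<Sum>k\<in>UNIV. c $ k) + A / v)"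

definition Qf :: "real^'n \<Rightarrow> real \<Rightarrow> real \<Rightarrow> real^'n \<Rightarrow> real \<Rightarrow> real" where
  "Qf z zA A c v = (\<Sum>k\<in>UNIV. z $ k * c $ k) + zA * A / v"

definition I_alpha :: "real^'n \<Rightarrow> real^'n \<Rightarrow> (real \<Rightarrow> real^'n \<Rightarrow> real^'n) \<Rightarrow> (real \<Rightarrow> real^'n \<Rightarrow> real^'n)
     \<Rightarrow> real \<Rightarrow> real^'n \<Rightarrow> real \<Rightarrow> real" where
  "I_alpha z ce j p \<alpha> c \<phi> = z \<bullet> (j \<phi> (mu z ce c \<phi>) + \<alpha> *\<^sub>R p \<phi> c)"

definition Gamma :: "real^'n \<Rightarrow> real^'n \<Rightarrow> real \<Rightarrow> real \<Rightarrow> (real \<Rightarrow> real^'n \<Rightarrow> real^'n)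
     \<Rightarrow> (real \<Rightarrow> real^'n \<Rightarrow> real^'n) \<Rightarrow> real \<Rightarrow> ((real^'n) \<times> real \<times> real) set" where
  "Gamma z ce A zA j p \<alpha> = {(c, v, \<phi>). pos_vec c \<and> 0 < v \<and> Qf z zA A c v = 0 \<and> I_alpha z ce j p \<alpha> c \<phi> = 0}"

definition Cyl :: "real^'n \<Rightarrow> real \<Rightarrow> ((real^'n) \<times> real \<times> real) set" where
  "Cyl ce r = {(c, v, \<phi>). norm (c - ce) < r \<and> \<bar>\<phi>\<bar> < r}"

definition pl_solution :: "real^'n \<Rightarrow> real^'n \<Rightarrow> real \<Rightarrow> real \<Rightarrow> (real \<Rightarrow> real^'n \<Rightarrow> real^'n)
     \<Rightarrow> (real \<Rightarrow> real^'n \<Rightarrow> real^'n) \<Rightarrow> (real \<Rightarrow> real) \<Rightarrow> real \<Rightarrow> (real^'n) \<times> real \<times> real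
     \<Rightarrow> real \<Rightarrow> (real \<Rightarrow> real^'n) \<Rightarrow> (real \<Rightarrow> real) \<Rightarrow> (real \<Rightarrow> real) \<Rightarrow> bool" where
  "pl_solution z ce A zA j p jw \<alpha> y0 T c v \<phi> \<longleftrightarrow>
     0 < T \<and>
     (\<exists>c'. continuous_on {0..<T} c' \<and> (\<forall>t\<in>{0..<T}. (c has_vector_derivative c' t) (at t within {0..<T}))) \<and>
     (\<exists>v'. continuous_on {0..<T} v' \<and> (\<forall>t\<in>{0..<T}. (v has_vector_derivative v' t) (at t within {0..<T}))) \<and>
     continuous_on {0..<T} \<phi> \<and>
     (\<forall>t\<in>{0..<T}. pos_vec (c t) \<and> 0 < v t \<and>
        ((\<lambda>s. v s *\<^sub>R c s) has_vector_derivative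
            (- j (\<phi> t) (mu z ce (c t) (\<phi> t)) - \<alpha> *\<^sub>R p (\<phi> t) (c t))) (at t within {0..<T}) \<and>
        Qf z zA A (c t) (v t) = 0 \<and>
        (v has_vector_derivative (- jw (pi_w ce A (c t) (v t)))) (at t within {0..<T})) \<and>
     (c 0, v 0, \<phi> 0) = y0"

end

theory Submission
  imports Defs
begin

text \<open>
  Proof outline.
  \<^item> The current \<open>I\<^sub>\<alpha>(c, \<phi>)\<close> is \<open>C\<^sup>1\<close>, vanishes at \<open>(c\<^sup>e, 0, 0)\<close> and has \<open>\<partial>I/\<partial>\<phi> = \<langle>z, J z\<rangle> > 0\<close>
    there (\<open>J\<close> the positive definite Jacobian of \<open>j\<close>).  A scalar implicit function theorem,
    derived from the inverse function theorem, gives the \<open>C\<^sup>1\<close> solution \<open>\<Phi>\<close>.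
  \<^item> Inside the cylinder, \<open>\<Gamma>\<^sub>\<alpha>\<close> is then the image of an open set under a \<open>C\<^sup>1\<close> map with a linear
    left inverse (a graph over \<open>c\<close> if \<open>z A \<noteq> 0\<close>, over \<open>(c, v)\<close> with \<open>\<langle>z, c\<rangle> = 0\<close> otherwise),
    hence a submanifold.
  \<^item> Substituting \<open>\<phi> = \<Phi>(c, \<alpha>)\<close> turns the system into an ODE for \<open>(c, v)\<close> with a \<open>C\<^sup>1\<close> field.
    Existence follows from Picard iteration; electroneutrality is conserved since
    \<open>\<langle>z, v c\<rangle>' = - I\<^sub>\<alpha> = 0\<close>.  Conversely every solution satisfies \<open>I\<^sub>\<alpha> = 0\<close> (differentiate
    \<open>Q = 0\<close>), hence solves the same ODE while it stays near the surface; a continuity argument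
    along the time axis then gives uniqueness.
\<close>

section \<open>Continuously differentiable maps\<close>

text \<open>For calculations it is more convenient to carry the derivative as a
  family of linear maps \<open>D x\<close> whose values \<open>D x v\<close> depend continuously on \<open>x\<close>; on
  Euclidean domains the two notions agree.\<close>

definition C1_deriv :: "'a::real_normed_vector set \<Rightarrow> ('a \<Rightarrow> 'b::real_normed_vector) \<Rightarrow> ('a \<Rightarrow> 'a \<Rightarrow> 'b) \<Rightarrow> bool"
  where "C1_deriv S f D \<longleftrightarrow> (\<forall>x\<in>S. (f has_derivative D x) (at x)) \<and> (\<forall>v. continuous_on S (\<lambda>x. D x v))"

definition C1 :: "'a::real_normed_vector set \<Rightarrow> ('a \<Rightarrow> 'b::real_normed_vector) \<Rightarrow> bool"
  where "C1 S f \<longleftrightarrow> (\<exists>D. C1_deriv S f D)"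

lemma C1I: "C1_deriv S f D \<Longrightarrow> C1 S f"
  unfolding C1_def by blast

lemma C1_derivD: "C1_deriv S f D \<Longrightarrow> x \<in> S \<Longrightarrow> (f has_derivative D x) (at x)"
  by (simp add: C1_deriv_def)

lemma C1_deriv_continuous_apply: "C1_deriv S f D \<Longrightarrow> continuous_on S (\<lambda>x. D x v)"
  by (simp add: C1_deriv_def)

lemma C1_deriv_bounded_linear: "C1_deriv S f D \<Longrightarrow> x \<in> S \<Longrightarrow> bounded_linear (D x)"
  using C1_derivD has_derivative_bounded_linear by blast

lemma C1_deriv_continuous_on: "C1_deriv S f D \<Longrightarrow> continuous_on S f"
  by (meson C1_derivD continuous_at_imp_continuous_on has_derivative_continuous)

lemma C1_deriv_subset: "C1_deriv S f D \<Longrightarrow> T \<subseteq> S \<Longrightarrow> C1_deriv T f D"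
  unfolding C1_deriv_def by (meson continuous_on_subset subsetD)

lemma C1_deriv_const: "C1_deriv S (\<lambda>x. c) (\<lambda>x v. 0)"
  unfolding C1_deriv_def by (auto intro: has_derivative_const)

lemma C1_deriv_linear: "bounded_linear l \<Longrightarrow> C1_deriv S l (\<lambda>x. l)"
  unfolding C1_deriv_def by (auto intro: bounded_linear_imp_has_derivative)

lemma C1_deriv_add:
  "C1_deriv S f Df \<Longrightarrow> C1_deriv S g Dg \<Longrightarrow> C1_deriv S (\<lambda>x. f x + g x) (\<lambda>x v. Df x v + Dg x v)"
  unfolding C1_deriv_def by (auto intro!: has_derivative_add continuous_intros)

lemma C1_deriv_diff:
  "C1_deriv S f Df \<Longrightarrow> C1_deriv S g Dg \<Longrightarrow> C1_deriv S (\<lambda>x. f x - g x) (\<lambda>x v. Df x v - Dg x v)"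
  unfolding C1_deriv_def by (auto intro!: has_derivative_diff continuous_intros)

lemma C1_deriv_minus: "C1_deriv S f Df \<Longrightarrow> C1_deriv S (\<lambda>x. - f x) (\<lambda>x v. - Df x v)"
  unfolding C1_deriv_def by (auto intro!: has_derivative_minus continuous_intros)

lemma C1_deriv_scaleR:
  fixes f :: "'a::real_normed_vector \<Rightarrow> real"
  assumes "C1_deriv S f Df" "C1_deriv S g Dg"
  shows "C1_deriv S (\<lambda>x. f x *\<^sub>R g x) (\<lambda>x v. f x *\<^sub>R Dg x v + Df x v *\<^sub>R g x)"
  using assms C1_deriv_continuous_on[OF assms(1)] C1_deriv_continuous_on[OF assms(2)]
  unfolding C1_deriv_def by (auto intro!: has_derivative_scaleR continuous_intros)

lemma C1_deriv_Pair:
  "C1_deriv S f Df \<Longrightarrow> C1_deriv S g Dg \<Longrightarrow> C1_deriv S (\<lambda>x. (f x, g x)) (\<lambda>x v. (Df x v, Dg x v))"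
  unfolding C1_deriv_def by (auto intro!: has_derivative_Pair continuous_intros)

lemma C1_deriv_sum:
  "finite I \<Longrightarrow> (\<And>i. i \<in> I \<Longrightarrow> C1_deriv S (f i) (Df i)) \<Longrightarrow>
   C1_deriv S (\<lambda>x. \<Sum>i\<in>I. f i x) (\<lambda>x v. \<Sum>i\<in>I. Df i x v)"
  unfolding C1_deriv_def by (auto intro!: has_derivative_sum continuous_on_sum)

text \<open>Chain rule.  Continuity of \<open>x \<mapsto> Dg (f x) (Df x v)\<close> follows by expanding
  \<open>Df x v\<close> in the basis of the (finite-dimensional) intermediate space.\<close>

lemma C1_deriv_compose:
  fixes f :: "'a::real_normed_vector \<Rightarrow> 'b::euclidean_space"
  assumes f: "C1_deriv S f Df" and g: "C1_deriv T g Dg" and ST: "\<And>x. x \<in> S \<Longrightarrow> f x \<in> T"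
  shows "C1_deriv S (\<lambda>x. g (f x)) (\<lambda>x v. Dg (f x) (Df x v))"
  unfolding C1_deriv_def
proof safe
  fix x assume x: "x \<in> S"
  show "((\<lambda>x. g (f x)) has_derivative (\<lambda>v. Dg (f x) (Df x v))) (at x)"
    using diff_chain_at[OF C1_derivD[OF f x] C1_derivD[OF g ST[OF x]]] by (simp add: o_def)
next
  fix v
  have basis_expansion: "Dg (f x) (Df x v) = (\<Sum>i\<in>Basis. (Df x v \<bullet> i) *\<^sub>R Dg (f x) i)" if "x \<in> S" for x
  proof -
    have "Dg (f x) (Df x v) = Dg (f x) (\<Sum>i\<in>Basis. (Df x v \<bullet> i) *\<^sub>R i)"
      by (simp add: euclidean_representation)
    then show ?thesis
      using C1_deriv_bounded_linear[OF g ST[OF that]]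
      by (simp add: linear_sum linear_scale bounded_linear.linear)
  qed
  have "continuous_on S (\<lambda>x. \<Sum>i\<in>Basis. (Df x v \<bullet> i) *\<^sub>R Dg (f x) i)"
  proof (intro continuous_on_sum continuous_intros)
    fix i :: 'b
    show "continuous_on S (\<lambda>x. Df x v)" using C1_deriv_continuous_apply[OF f] .
    show "continuous_on S (\<lambda>x. Dg (f x) i)"
      using continuous_on_compose2[OF C1_deriv_continuous_apply[OF g] C1_deriv_continuous_on[OF f]] ST
      by blast
  qed
  then show "continuous_on S (\<lambda>x. Dg (f x) (Df x v))"
    by (rule continuous_on_eq) (simp add: basis_expansion)
qed

lemma C1_deriv_ln: "C1_deriv {x::real. 0 < x} ln (\<lambda>x v. inverse x * v)"
  unfolding C1_deriv_def
  by (auto intro!: continuous_intros has_field_derivative_imp_has_derivative[OF DERIV_ln, simplified])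

lemma C1_deriv_inverse:
  "C1_deriv {x::real. x \<noteq> 0} inverse (\<lambda>x v. - (inverse x ^ Suc (Suc 0)) * v)"
  unfolding C1_deriv_def
  by (auto intro!: continuous_intros
      has_field_derivative_imp_has_derivative[OF DERIV_inverse[of _ UNIV], simplified])

lemma C1_on_imp_C1:
  assumes "C1_on S f"
  shows "C1 S f"
proof -
  obtain f' where "\<forall>x\<in>S. (f has_derivative blinfun_apply (f' x)) (at x)" and "continuous_on S f'"
    using assms unfolding C1_on_def by blast
  then have "C1_deriv S f (\<lambda>x. blinfun_apply (f' x))"
    unfolding C1_deriv_def by (auto intro!: continuous_intros)
  then show ?thesis by (rule C1I)
qed

lemma C1_deriv_blinfun:
  fixes f :: "'a::euclidean_space \<Rightarrow> 'b::real_normed_vector"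
  assumes D: "C1_deriv S f D"
  shows "\<And>x. x \<in> S \<Longrightarrow> blinfun_apply (Blinfun (D x)) = D x"
    and "continuous_on S (\<lambda>x. Blinfun (D x))"
proof -
  show apply_eq: "blinfun_apply (Blinfun (D x)) = D x" if "x \<in> S" for x
    using C1_deriv_bounded_linear[OF D that] by (simp add: bounded_linear_Blinfun_apply)
  show "continuous_on S (\<lambda>x. Blinfun (D x))"
  proof (rule continuous_on_blinfun_componentwise)
    fix i :: 'a
    show "continuous_on S (\<lambda>x. blinfun_apply (Blinfun (D x)) i)"
      by (rule continuous_on_eq[OF C1_deriv_continuous_apply[OF D, of i]]) (simp add: apply_eq)
  qed
qed

lemma C1_imp_C1_on:
  fixes f :: "'a::euclidean_space \<Rightarrow> 'b::real_normed_vector"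
  assumes "C1 S f"
  shows "C1_on S f"
proof -
  obtain D where D: "C1_deriv S f D" using assms unfolding C1_def by blast
  show ?thesis
    unfolding C1_on_def using C1_deriv_blinfun[OF D] C1_derivD[OF D] by metis
qed

lemma C1_const: "C1 S (\<lambda>x. c)"
  by (rule C1I[OF C1_deriv_const])

lemma C1_linear: "bounded_linear l \<Longrightarrow> C1 S l"
  by (rule C1I[OF C1_deriv_linear])

lemma C1_ident: "C1 S (\<lambda>x. x)"
  by (rule C1_linear[OF bounded_linear_ident])

lemma C1_add: "C1 S f \<Longrightarrow> C1 S g \<Longrightarrow> C1 S (\<lambda>x. f x + g x)"
  unfolding C1_def by (blast intro: C1_deriv_add)

lemma C1_diff: "C1 S f \<Longrightarrow> C1 S g \<Longrightarrow> C1 S (\<lambda>x. f x - g x)"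
  unfolding C1_def by (blast intro: C1_deriv_diff)

lemma C1_minus: "C1 S f \<Longrightarrow> C1 S (\<lambda>x. - f x)"
  unfolding C1_def by (blast intro: C1_deriv_minus)

lemma C1_scaleR: "C1 S (f :: _ \<Rightarrow> real) \<Longrightarrow> C1 S g \<Longrightarrow> C1 S (\<lambda>x. f x *\<^sub>R g x)"
  unfolding C1_def by (blast intro: C1_deriv_scaleR)

lemma C1_mult: "C1 S (f :: _ \<Rightarrow> real) \<Longrightarrow> C1 S g \<Longrightarrow> C1 S (\<lambda>x. f x * g x)"
  using C1_scaleR[of S f g] by simp

lemma C1_Pair: "C1 S f \<Longrightarrow> C1 S g \<Longrightarrow> C1 S (\<lambda>x. (f x, g x))"
  unfolding C1_def by (blast intro: C1_deriv_Pair)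

lemma C1_subset: "C1 S f \<Longrightarrow> T \<subseteq> S \<Longrightarrow> C1 T f"
  unfolding C1_def by (blast intro: C1_deriv_subset)

lemma C1_continuous_on: "C1 S f \<Longrightarrow> continuous_on S f"
  unfolding C1_def by (blast intro: C1_deriv_continuous_on)

lemma C1_compose:
  fixes f :: "'a::real_normed_vector \<Rightarrow> 'b::euclidean_space"
  shows "C1 S f \<Longrightarrow> C1 T g \<Longrightarrow> (\<And>x. x \<in> S \<Longrightarrow> f x \<in> T) \<Longrightarrow> C1 S (\<lambda>x. g (f x))"
  unfolding C1_def by (blast intro: C1_deriv_compose)

lemma C1_sum:
  assumes "finite I" "\<And>i. i \<in> I \<Longrightarrow> C1 S (f i)"
  shows "C1 S (\<lambda>x. \<Sum>i\<in>I. f i x)"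
proof -
  obtain D where "\<And>i. i \<in> I \<Longrightarrow> C1_deriv S (f i) (D i)"
    using assms(2) unfolding C1_def by metis
  then show ?thesis by (intro C1I[OF C1_deriv_sum[OF assms(1)]])
qed

lemma C1_inverse:
  fixes f :: "'a::real_normed_vector \<Rightarrow> real"
  shows "C1 S f \<Longrightarrow> (\<And>x. x \<in> S \<Longrightarrow> f x \<noteq> 0) \<Longrightarrow> C1 S (\<lambda>x. inverse (f x))"
  using C1_compose[OF _ C1I[OF C1_deriv_inverse], of S f] by auto

lemma C1_ln:
  fixes f :: "'a::real_normed_vector \<Rightarrow> real"
  shows "C1 S f \<Longrightarrow> (\<And>x. x \<in> S \<Longrightarrow> f x > 0) \<Longrightarrow> C1 S (\<lambda>x. ln (f x))"
  using C1_compose[OF _ C1I[OF C1_deriv_ln], of S f] by auto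

lemma C1_vec:
  fixes g :: "'n::finite \<Rightarrow> 'a::real_normed_vector \<Rightarrow> real"
  assumes "\<And>k. C1 S (g k)"
  shows "C1 S (\<lambda>x. \<chi> k. g k x)"
proof -
  have "(\<chi> k. g k x) = (\<Sum>k\<in>UNIV. g k x *\<^sub>R axis k (1::real))" for x
    by (simp add: vec_eq_iff sum_component axis_def if_distrib cong: if_cong)
  moreover have "C1 S (\<lambda>x. \<Sum>k\<in>UNIV. g k x *\<^sub>R axis k (1::real))"
    by (intro C1_sum C1_scaleR C1_const assms) auto
  ultimately show ?thesis by simp
qed

section \<open>A scalar implicit function theorem\<close>

text \<open>The equation \<open>F (x, y) = 0\<close> with \<open>y\<close> real is solved near a zero \<open>(a, b)\<close> where
  \<open>\<partial>F/\<partial>y \<noteq> 0\<close>, by applying the inverse function theorem to the map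
  \<open>(x, y) \<mapsto> (x, F (x, y))\<close>.\<close>

lemma linear_split_last:
  fixes L :: "'a::real_normed_vector \<times> real \<Rightarrow> real"
  assumes "bounded_linear L"
  shows "L (h, k) = L (h, 0) + k * L (0, 1)"
proof -
  interpret bounded_linear L by fact
  have "(h, k) = (h, 0) + k *\<^sub>R (0, 1)" by simp
  then have "L (h, k) = L ((h, 0) + k *\<^sub>R (0, 1))" by metis
  then show ?thesis using add[of "(h, 0)" "k *\<^sub>R (0, 1)"] scale[of k "(0, 1)"] by simp
qed

lemma Pair_mem_ball:
  fixes a x :: "'a::real_normed_vector" and b y :: "'b::real_normed_vector"
  assumes "dist x a < d" "dist y b < e"
  shows "(x, y) \<in> ball (a, b) (d + e)"
proof -
  have "norm ((a, b) - (x, y)) \<le> norm (a - x) + norm (b - y)"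
    using norm_Pair_le[of "a - x" "b - y"] by simp
  with assms show ?thesis by (simp add: dist_norm norm_minus_commute)
qed

lemma graph_map_derivative_invertible:
  fixes L :: "'a::euclidean_space \<times> real \<Rightarrow> real"
  assumes L: "bounded_linear L" and nz: "L (0, 1) \<noteq> 0"
  shows "\<exists>M. M o\<^sub>L Blinfun (\<lambda>h. (fst h, L h)) = id_blinfun"
proof -
  define M where "M = (\<lambda>q::'a \<times> real. (fst q, (snd q - L (fst q, 0)) / L (0, 1)))"
  have "bounded_linear (\<lambda>q::'a \<times> real. L (fst q, 0))"
    using bounded_linear_compose[OF L bounded_linear_Pair[OF bounded_linear_fst bounded_linear_zero]] .
  then have M_lin: "bounded_linear M"
    unfolding M_def
    by (intro bounded_linear_Pair bounded_linear_fst bounded_linear_compose[OF bounded_linear_divide]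
        bounded_linear_sub bounded_linear_snd)
  have G_lin: "bounded_linear (\<lambda>h::'a \<times> real. (fst h, L h))"
    by (intro bounded_linear_Pair bounded_linear_fst L)
  have "Blinfun M o\<^sub>L Blinfun (\<lambda>h. (fst h, L h)) = id_blinfun"
  proof (rule blinfun_eqI)
    fix h :: "'a \<times> real"
    have "L h = L (fst h, 0) + snd h * L (0, 1)"
      using linear_split_last[OF L, of "fst h" "snd h"] by simp
    then show "blinfun_apply (Blinfun M o\<^sub>L Blinfun (\<lambda>h. (fst h, L h))) h = blinfun_apply id_blinfun h"
      using M_lin G_lin nz by (simp add: bounded_linear_Blinfun_apply M_def prod_eq_iff)
  qed
  then show ?thesis by blast
qed

lemma implicit_derivative:
  fixes F :: "'a::real_normed_vector \<times> real \<Rightarrow> real"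
  assumes F: "(F has_derivative L) (at (x, \<Phi> x))" and \<Phi>: "(\<Phi> has_derivative E) (at x)"
    and U: "open U" "x \<in> U" "\<forall>x'\<in>U. F (x', \<Phi> x') = 0" and nz: "L (0, 1) \<noteq> 0"
  shows "E = (\<lambda>h. - L (h, 0) / L (0, 1))"
proof
  fix h
  have "((\<lambda>x. F (x, \<Phi> x)) has_derivative (\<lambda>h. L (h, E h))) (at x)"
    using diff_chain_at[OF has_derivative_Pair[OF has_derivative_ident \<Phi>] F] by (simp add: o_def)
  then have "((\<lambda>x. 0::real) has_derivative (\<lambda>h. L (h, E h))) (at x)"
    by (rule has_derivative_transform_within_open[OF _ U(1,2)]) (use U(3) in auto)
  then have "L (h, E h) = 0"
    using has_derivative_unique[OF _ has_derivative_const] by metis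
  then show "E h = - L (h, 0) / L (0, 1)"
    using linear_split_last[OF has_derivative_bounded_linear[OF F], of h "E h"] nz
    by (simp add: field_simps)
qed

lemma implicit_function_branch:
  fixes F :: "'a::euclidean_space \<times> real \<Rightarrow> real"
  assumes S: "open S" and F: "C1_deriv S F DF" and w0: "(a, b) \<in> S" and F0: "F (a, b) = 0"
    and nz: "DF (a, b) (0, 1) \<noteq> 0"
  obtains U \<delta> \<Phi> where "open U" "a \<in> U" "\<delta> > 0" "continuous_on U \<Phi>"
    "\<forall>x\<in>U. \<bar>\<Phi> x - b\<bar> < \<delta> \<and> F (x, \<Phi> x) = 0 \<and> (x, \<Phi> x) \<in> S"
    "\<forall>x\<in>U. \<forall>y. \<bar>y - b\<bar> < \<delta> \<and> F (x, y) = 0 \<longrightarrow> y = \<Phi> x"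
    "\<forall>x\<in>U. \<Phi> differentiable (at x) \<and> DF (x, \<Phi> x) (0, 1) \<noteq> 0"
proof -
  define G where "G = (\<lambda>w::'a \<times> real. (fst w, F w))"
  define DG where "DG = (\<lambda>w (h::'a \<times> real). (fst h, DF w h))"
  have CG: "C1_deriv S G DG"
    unfolding G_def DG_def by (rule C1_deriv_Pair[OF C1_deriv_linear[OF bounded_linear_fst] F])
  note DG_blinfun = C1_deriv_blinfun[OF CG]
  obtain M where M: "M o\<^sub>L Blinfun (DG (a, b)) = id_blinfun"
    using graph_map_derivative_invertible[OF C1_deriv_bounded_linear[OF F w0] nz]
    unfolding DG_def by blast
  obtain U' V g g' where U': "open U'" "U' \<subseteq> S" "(a, b) \<in> U'" and V: "open V" "G (a, b) \<in> V"
    and hom: "homeomorphism U' V G g"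
    and dg: "\<And>y. y \<in> V \<Longrightarrow> (g has_derivative g' y) (at y)"
    and bij: "\<And>y. y \<in> V \<Longrightarrow> bij (blinfun_apply (Blinfun (DG (g y))))"
    using inverse_function_theorem[OF S, of G "\<lambda>w. Blinfun (DG w)", OF _ DG_blinfun(2) w0 M]
      C1_derivD[OF CG] DG_blinfun(1) by metis
  have g_cont: "continuous_on V g" using hom unfolding homeomorphism_def by blast
  define \<Phi> where "\<Phi> = (\<lambda>x. snd (g (x, 0)))"
  have g_slice: "g (x, 0) = (x, \<Phi> x)" if "(x, 0) \<in> V" for x
    using homeomorphism_apply2[OF hom that] unfolding G_def \<Phi>_def by (metis fst_conv prod.collapse)
  have F_slice: "F (x, \<Phi> x) = 0" if "(x, 0) \<in> V" for x
    using homeomorphism_apply2[OF hom that] g_slice[OF that] unfolding G_def by (metis prod.inject)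
  define V' where "V' = {x. (x, 0) \<in> V}"
  have V'_open: "open V'"
    using open_vimage[OF V(1), of "\<lambda>x::'a. (x, 0::real)"] unfolding V'_def vimage_def
    by (simp add: continuous_intros)
  have \<Phi>_cont: "continuous_on V' \<Phi>"
    unfolding \<Phi>_def V'_def by (intro continuous_intros continuous_on_compose2[OF g_cont]) auto
  obtain r where r: "r > 0" "ball (a, b) r \<subseteq> U'" using U' openE by blast
  define \<delta> where "\<delta> = r / 2"
  have strip: "(x, y) \<in> U'" if "dist x a < \<delta>" "dist y b < \<delta>" for x y
    using Pair_mem_ball[OF that] r unfolding \<delta>_def by auto
  define U where "U = V' \<inter> \<Phi> -` ball b \<delta> \<inter> ball a \<delta>"
  have U_open: "open U"
    unfolding U_def using continuous_open_preimage[OF \<Phi>_cont V'_open open_ball] by blast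
  have \<Phi>_a: "\<Phi> a = b"
    using homeomorphism_apply1[OF hom U'(3)] F0 unfolding \<Phi>_def G_def by simp
  have a_U: "a \<in> U"
    using V(2) F0 \<Phi>_a r unfolding U_def V'_def G_def \<delta>_def by simp
  have graph: "\<forall>x\<in>U. \<bar>\<Phi> x - b\<bar> < \<delta> \<and> F (x, \<Phi> x) = 0 \<and> (x, \<Phi> x) \<in> S"
    using F_slice strip U'(2) unfolding U_def V'_def
    by (auto simp: dist_norm norm_minus_commute abs_minus_commute)
  have unique: "\<forall>x\<in>U. \<forall>y. \<bar>y - b\<bar> < \<delta> \<and> F (x, y) = 0 \<longrightarrow> y = \<Phi> x"
  proof (intro ballI allI impI)
    fix x y assume x: "x \<in> U" and y: "\<bar>y - b\<bar> < \<delta> \<and> F (x, y) = 0"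
    have "(x, y) \<in> U'" using strip x y unfolding U_def by (auto simp: dist_real_def dist_commute)
    moreover have "G (x, y) = (x, 0)" using y unfolding G_def by simp
    ultimately have "g (x, 0) = (x, y)" using homeomorphism_apply1[OF hom] by metis
    then show "y = \<Phi> x" unfolding \<Phi>_def by simp
  qed
  have regular: "\<Phi> differentiable (at x) \<and> DF (x, \<Phi> x) (0, 1) \<noteq> 0" if x: "x \<in> U" for x
  proof
    have xV: "(x, 0) \<in> V" using x unfolding U_def V'_def by simp
    have "((\<lambda>x. g (x, 0)) has_derivative (\<lambda>h. g' (x, 0) (h, 0))) (at x)"
      using diff_chain_at[OF has_derivative_Pair[OF has_derivative_ident has_derivative_const] dg[OF xV]]
      by (simp add: o_def)
    then have "(\<Phi> has_derivative (\<lambda>h. snd (g' (x, 0) (h, 0)))) (at x)"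
      unfolding \<Phi>_def by (rule has_derivative_snd)
    then show "\<Phi> differentiable (at x)" unfolding differentiable_def by blast
    have xS: "(x, \<Phi> x) \<in> S" using graph x by blast
    \<comment> \<open>\<open>DG\<close> is injective along the branch, and \<open>DG w (0, 1) = (0, DF w (0, 1))\<close>.\<close>
    show "DF (x, \<Phi> x) (0, 1) \<noteq> 0"
    proof
      assume zero: "DF (x, \<Phi> x) (0, 1) = 0"
      have "inj (DG (x, \<Phi> x))"
        using bij[OF xV] DG_blinfun(1)[OF xS] g_slice[OF xV] by (simp add: bij_def)
      moreover have "DG (x, \<Phi> x) (0, 1) = DG (x, \<Phi> x) (0, 0)"
        using zero linear_0[OF bounded_linear.linear[OF C1_deriv_bounded_linear[OF F xS]]]
        unfolding DG_def by (simp add: zero_prod_def)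
      ultimately show False by (metis injD prod.inject zero_neq_one)
    qed
  qed
  have "continuous_on U \<Phi>" using \<Phi>_cont unfolding U_def by (rule continuous_on_subset) auto
  moreover have "\<delta> > 0" using r unfolding \<delta>_def by simp
  ultimately show ?thesis using that[OF U_open a_U] graph unique regular by blast
qed

lemma implicit_function:
  fixes F :: "'a::euclidean_space \<times> real \<Rightarrow> real"
  assumes S: "open S" and F: "C1_deriv S F DF" and w0: "(a, b) \<in> S" and F0: "F (a, b) = 0"
    and nz: "DF (a, b) (0, 1) \<noteq> 0"
  obtains U \<delta> \<Phi> where "open U" "a \<in> U" "\<delta> > 0" "C1 U \<Phi>"
    "\<forall>x\<in>U. \<bar>\<Phi> x - b\<bar> < \<delta> \<and> F (x, \<Phi> x) = 0"
    "\<forall>x\<in>U. \<forall>y. \<bar>y - b\<bar> < \<delta> \<and> F (x, y) = 0 \<longrightarrow> y = \<Phi> x"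
proof -
  obtain U \<delta> \<Phi> where U: "open U" "a \<in> U" and \<delta>: "\<delta> > 0" and \<Phi>_cont: "continuous_on U \<Phi>"
    and graph: "\<forall>x\<in>U. \<bar>\<Phi> x - b\<bar> < \<delta> \<and> F (x, \<Phi> x) = 0 \<and> (x, \<Phi> x) \<in> S"
    and unique: "\<forall>x\<in>U. \<forall>y. \<bar>y - b\<bar> < \<delta> \<and> F (x, y) = 0 \<longrightarrow> y = \<Phi> x"
    and regular: "\<forall>x\<in>U. \<Phi> differentiable (at x) \<and> DF (x, \<Phi> x) (0, 1) \<noteq> 0"
    by (rule implicit_function_branch[OF S F w0 F0 nz])
  define D\<Phi> where "D\<Phi> = (\<lambda>x h. - DF (x, \<Phi> x) (h, 0) / DF (x, \<Phi> x) (0, 1))"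
  have "(\<Phi> has_derivative D\<Phi> x) (at x)" if x: "x \<in> U" for x
  proof -
    obtain E where E: "(\<Phi> has_derivative E) (at x)"
      using regular x unfolding differentiable_def by blast
    have "E = D\<Phi> x"
      unfolding D\<Phi>_def
      by (rule implicit_derivative[OF C1_derivD[OF F] E U(1) x]) (use graph regular x in auto)
    with E show ?thesis by simp
  qed
  moreover have "continuous_on U (\<lambda>x. D\<Phi> x h)" for h
  proof -
    have "continuous_on U (\<lambda>x. DF (x, \<Phi> x) v)" for v
      using continuous_on_compose2[OF C1_deriv_continuous_apply[OF F]
          continuous_on_Pair[OF continuous_on_id \<Phi>_cont]] graph by blast
    then show ?thesis unfolding D\<Phi>_def using regular by (intro continuous_intros) auto
  qed
  ultimately have "C1 U \<Phi>" unfolding C1_def C1_deriv_def by blast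
  with U \<delta> graph unique show ?thesis using that by blast
qed

section \<open>Autonomous ODEs with a \<open>C\<^sup>1\<close> vector field\<close>

text \<open>Existence is proved by Picard iteration for a truncated, globally Lipschitz field;
  uniqueness by a Gronwall-type estimate on short intervals, propagated along the time axis
  by a continuity (``real induction'') argument.\<close>

lemma C1_locally_lipschitz:
  fixes f :: "'a::euclidean_space \<Rightarrow> 'b::real_normed_vector"
  assumes \<Omega>: "open \<Omega>" and f: "C1 \<Omega> f" and y: "y \<in> \<Omega>"
  shows "\<exists>\<rho>>0. \<exists>L>0. cball y \<rho> \<subseteq> \<Omega> \<and>
           (\<forall>x\<in>cball y \<rho>. \<forall>x'\<in>cball y \<rho>. norm (f x - f x') \<le> L * norm (x - x'))"
proof -
  obtain D where D: "C1_deriv \<Omega> f D" using f unfolding C1_def by blast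
  obtain \<rho> where \<rho>: "\<rho> > 0" "cball y \<rho> \<subseteq> \<Omega>" using open_contains_cball \<Omega> y by blast
  \<comment> \<open>The operator norm of \<open>D x\<close> is bounded on the compact ball.\<close>
  have "continuous_on (cball y \<rho>) (\<lambda>x. \<Sum>i\<in>Basis. norm (D x i))"
    using \<rho>(2) by (intro continuous_intros continuous_on_subset[OF C1_deriv_continuous_apply[OF D]])
  then have "bounded ((\<lambda>x. \<Sum>i\<in>Basis. norm (D x i)) ` cball y \<rho>)"
    by (rule compact_imp_bounded[OF compact_continuous_image[OF _ compact_cball]])
  then obtain B where B: "\<forall>x\<in>cball y \<rho>. norm (\<Sum>i\<in>Basis. norm (D x i)) \<le> B"
    unfolding bounded_iff by blast
  define L where "L = max B 1"
  have "norm (f x - f x') \<le> L * norm (x - x')" if "x \<in> cball y \<rho>" "x' \<in> cball y \<rho>" for x x'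
  proof (rule differentiable_bound[OF convex_cball _ _ that])
    fix z assume z: "z \<in> cball y \<rho>"
    show "(f has_derivative D z) (at z within cball y \<rho>)"
      using C1_derivD[OF D] \<rho>(2) z by (blast intro: has_derivative_at_withinI)
    have "onorm (D z) \<le> (\<Sum>i\<in>Basis. norm (D z i))"
      using onorm_componentwise C1_deriv_bounded_linear[OF D] \<rho>(2) z by blast
    also have "\<dots> \<le> L" using B z unfolding L_def by force
    finally show "onorm (D z) \<le> L" .
  qed
  moreover have "L > 0" unfolding L_def by simp
  ultimately show ?thesis using \<rho> by blast
qed

text \<open>Picard's theorem for a bounded, globally Lipschitz field: on a time interval of length
  \<open>h\<close> with \<open>h L \<le> 1/2\<close> the integral equation has a solution, obtained as the fixed point of
  a contraction on bounded continuous functions (time is clamped to \<open>[0, h]\<close>).\<close>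

lemma picard_integral_solution:
  fixes f :: "'a::euclidean_space \<Rightarrow> 'a"
  assumes lip: "\<And>x x'. norm (f x - f x') \<le> L * norm (x - x')" and L: "0 < L"
    and bnd: "\<And>x. norm (f x) \<le> B" and h: "0 < h" "h * L \<le> 1/2"
  obtains y where "continuous_on {0..h} y" "\<And>t. t \<in> {0..h} \<Longrightarrow> y t = y0 + integral {0..t} (\<lambda>s. f (y s))"
proof -
  have f_cont: "continuous_on UNIV f"
    by (rule lipschitz_on_continuous_on[of L]) (auto simp: lipschitz_on_def dist_norm lip L less_imp_le)
  have fu_cont: "continuous_on UNIV (\<lambda>s. f (u s))" for u :: "real \<Rightarrow>\<^sub>C 'a"
    using continuous_on_compose2[OF f_cont continuous_on_apply_bcontfun] by blast
  define cl where "cl = (\<lambda>t::real. max 0 (min h t))"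
  have cl: "cl t \<in> {0..h}" for t unfolding cl_def using h by auto
  have cl_id: "cl t = t" if "t \<in> {0..h}" for t using that unfolding cl_def by auto
  define Op where "Op = (\<lambda>u::real \<Rightarrow>\<^sub>C 'a. (\<lambda>t. y0 + integral {0..cl t} (\<lambda>s. f (u s))))"
  have Op_bcontfun: "Op u \<in> bcontfun" for u
  proof (rule bcontfun_normI)
    have "continuous_on {0..h} (\<lambda>\<tau>. integral {0..\<tau>} (\<lambda>s. f (u s)))"
      unfolding continuous_on_eq_continuous_within
      using integral_has_vector_derivative[OF continuous_on_subset[OF fu_cont]]
      by (meson has_vector_derivative_continuous subset_UNIV)
    then have "continuous_on UNIV (\<lambda>t. integral {0..cl t} (\<lambda>s. f (u s)))"
      by (rule continuous_on_compose2) (use cl in \<open>auto simp: cl_def intro!: continuous_intros\<close>)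
    then show "continuous_on UNIV (Op u)"
      unfolding Op_def by (intro continuous_intros)
    fix t
    have "norm (integral {0..cl t} (\<lambda>s. f (u s))) \<le> B * (cl t - 0)"
      by (rule integral_bound[OF _ continuous_on_subset[OF fu_cont]]) (use cl bnd in auto)
    also have "\<dots> \<le> B * h" using cl[of t] bnd[of 0] by (auto intro!: mult_left_mono order_trans[OF norm_ge_zero])
    finally show "norm (Op u t) \<le> norm y0 + B * h" unfolding Op_def
      by (meson norm_triangle_le add_left_mono)
  qed
  define Tm :: "(real \<Rightarrow>\<^sub>C 'a) \<Rightarrow> (real \<Rightarrow>\<^sub>C 'a)" where "Tm = (\<lambda>u. Bcontfun (Op u))"
  have Tm_apply: "apply_bcontfun (Tm u) = Op u" for u
    unfolding Tm_def using Op_bcontfun by (simp add: Bcontfun_inverse)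
  have contraction: "dist (Tm u) (Tm w) \<le> (1/2) * dist u w" for u w
  proof (rule dist_bound)
    fix t
    have diff: "Op u t - Op w t = integral {0..cl t} (\<lambda>s. f (u s) - f (w s))"
      unfolding Op_def
      by (simp add: integral_diff integrable_continuous_real continuous_on_subset[OF fu_cont])
    have "norm (Op u t - Op w t) \<le> (L * dist u w) * (cl t - 0)"
      unfolding diff
    proof (rule integral_bound)
      show "continuous_on {0..cl t} (\<lambda>s. f (u s) - f (w s))"
        using fu_cont[of u] fu_cont[of w] by (intro continuous_intros) (auto intro: continuous_on_subset)
      show "0 \<le> cl t" using cl by auto
      fix s
      have "norm (f (u s) - f (w s)) \<le> L * norm (u s - w s)" by (rule lip)
      also have "\<dots> \<le> L * dist u w" using dist_bounded[of u s w] L by (simp add: dist_norm mult_left_mono)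
      finally show "norm (f (u s) - f (w s)) \<le> L * dist u w" .
    qed
    also have "\<dots> = (cl t * L) * dist u w" by simp
    also have "\<dots> \<le> (h * L) * dist u w" using cl[of t] L by (intro mult_right_mono) auto
    also have "\<dots> \<le> (1/2) * dist u w" by (rule mult_right_mono[OF h(2) zero_le_dist])
    finally show "dist (apply_bcontfun (Tm u) t) (apply_bcontfun (Tm w) t) \<le> (1/2) * dist u w"
      unfolding Tm_apply dist_norm .
  qed
  obtain u where "Tm u = u" using banach_fix_type[of "1/2" Tm] contraction by auto
  then have "u t = y0 + integral {0..t} (\<lambda>s. f (u s))" if "t \<in> {0..h}" for t
    using Tm_apply[of u] cl_id[OF that] unfolding Op_def by metis
  then show ?thesis using that[of "apply_bcontfun u"] by simp
qed

text \<open>Local existence for \<open>y' = f y\<close>, \<open>f\<close> of class \<open>C\<^sup>1\<close> on an open set: compose \<open>f\<close> with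
  the nearest-point projection onto a small closed ball, where \<open>f\<close> is Lipschitz and bounded,
  and observe that the Picard solution never leaves that ball.\<close>

lemma ode_local_existence:
  fixes f :: "'a::euclidean_space \<Rightarrow> 'a"
  assumes \<Omega>: "open \<Omega>" and f: "C1 \<Omega> f" and y0: "y0 \<in> \<Omega>"
  obtains h u where "h > 0" "u 0 = y0" "continuous_on {0..h} u"
    "\<forall>t\<in>{0..h}. u t \<in> \<Omega> \<and> (u has_vector_derivative f (u t)) (at t within {0..h})"
proof -
  obtain \<rho> L where \<rho>: "\<rho> > 0" "L > 0" "cball y0 \<rho> \<subseteq> \<Omega>"
    and lip: "\<forall>x\<in>cball y0 \<rho>. \<forall>x'\<in>cball y0 \<rho>. norm (f x - f x') \<le> L * norm (x - x')"
    using C1_locally_lipschitz[OF \<Omega> f y0] by blast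
  define K where "K = cball y0 \<rho>"
  have K: "K \<noteq> {}" "closed K" "convex K" using \<rho> unfolding K_def by auto
  have "continuous_on K f"
    using C1_continuous_on[OF f] \<rho>(3) unfolding K_def by (rule continuous_on_subset)
  then have "bounded (f ` K)" unfolding K_def by (rule compact_imp_bounded[OF compact_continuous_image[OF _ compact_cball]])
  then obtain B0 where B0: "\<forall>x\<in>K. norm (f x) \<le> B0" unfolding bounded_iff by blast
  define B where "B = max B0 1"
  define P where "P = closest_point K"
  have PK: "P x \<in> K" for x unfolding P_def by (rule closest_point_in_set[OF K(2,1)])
  define ft where "ft = (\<lambda>x. f (P x))"
  have ft_bound: "norm (ft x) \<le> B" for x
    unfolding ft_def B_def using B0 PK[of x] by (meson max.coboundedI1)
  have ft_lip: "norm (ft x - ft x') \<le> L * norm (x - x')" for x x'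
  proof -
    have "norm (ft x - ft x') \<le> L * norm (P x - P x')" unfolding ft_def using lip PK unfolding K_def by blast
    also have "\<dots> \<le> L * norm (x - x')"
      using closest_point_lipschitz[OF K(3,2,1), of x x'] \<rho>(2) unfolding P_def dist_norm
      by (simp add: mult_left_mono)
    finally show ?thesis .
  qed
  define h where "h = min (\<rho> / B) (1 / (2 * L))"
  have h: "h > 0" "h * B \<le> \<rho>" "h * L \<le> 1/2"
    using \<rho> unfolding h_def B_def by (auto simp: min_def field_simps)
  obtain y where y_cont: "continuous_on {0..h} y"
    and y_eq: "\<And>t. t \<in> {0..h} \<Longrightarrow> y t = y0 + integral {0..t} (\<lambda>s. ft (y s))"
    using picard_integral_solution[OF ft_lip \<rho>(2) ft_bound h(1,3)] by blast
  have "continuous_on UNIV ft"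
    by (rule lipschitz_on_continuous_on[of L]) (auto simp: lipschitz_on_def dist_norm ft_lip less_imp_le[OF \<rho>(2)])
  then have fty_cont: "continuous_on {0..h} (\<lambda>s. ft (y s))"
    using continuous_on_compose2[OF _ y_cont] by blast
  \<comment> \<open>The solution stays in \<open>K\<close>, where the truncated field agrees with \<open>f\<close>.\<close>
  have yK: "y t \<in> K" if t: "t \<in> {0..h}" for t
  proof -
    have "norm (y t - y0) \<le> B * (t - 0)"
      using y_eq[OF t] integral_bound[of 0 t "\<lambda>s. ft (y s)" B] continuous_on_subset[OF fty_cont] t ft_bound
      by auto
    also have "\<dots> \<le> B * h" using t by (intro mult_left_mono) (auto simp: B_def)
    also have "\<dots> \<le> \<rho>" using h(2) by (simp add: mult.commute)
    finally show ?thesis unfolding K_def by (simp add: dist_norm norm_minus_commute)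
  qed
  have ft_y: "ft (y t) = f (y t)" if "t \<in> {0..h}" for t
    unfolding ft_def P_def using closest_point_self[OF yK[OF that]] by simp
  have "(y has_vector_derivative f (y t)) (at t within {0..h})" if t: "t \<in> {0..h}" for t
  proof -
    have "((\<lambda>t. y0 + integral {0..t} (\<lambda>s. ft (y s))) has_vector_derivative ft (y t)) (at t within {0..h})"
      using has_vector_derivative_add[OF has_vector_derivative_const
          integral_has_vector_derivative[OF fty_cont t]] by simp
    then show ?thesis using ft_y[OF t] by (intro has_vector_derivative_transform[OF t y_eq]) auto
  qed
  moreover have "y t \<in> \<Omega>" if "t \<in> {0..h}" for t using yK[OF that] \<rho>(3) unfolding K_def by blast
  moreover have "y 0 = y0" using y_eq[of 0] h(1) by simp
  ultimately show ?thesis using that[OF h(1) _ y_cont] by blast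
qed

lemma has_vector_derivative_unique_Ico:
  assumes "0 \<le> t" "t < T" "(f has_vector_derivative a) (at t within {0..<T})"
    "(f has_vector_derivative b) (at t within {0..<T})"
  shows "a = b"
proof -
  define \<tau> where "\<tau> = (t + T) / 2"
  have sub: "{t..\<tau>} \<subseteq> {0..<T}" and lt: "t < \<tau>" using assms(1,2) unfolding \<tau>_def by auto
  show ?thesis
    using vector_derivative_unique_within_closed_interval[of t \<tau> t f a b] lt
      has_vector_derivative_within_subset[OF assms(3) sub] has_vector_derivative_within_subset[OF assms(4) sub]
    by (simp add: cbox_interval)
qed

text \<open>Uniqueness on a short interval: if \<open>f\<close> is \<open>L\<close>-Lipschitz on a set containing both
  trajectories and the interval is shorter than \<open>1/L\<close>, the maximal distance \<open>M\<close> between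
  the two trajectories satisfies \<open>M \<le> L M (b - a) < M\<close> unless \<open>M = 0\<close>.\<close>

lemma lipschitz_ode_unique_short:
  fixes f :: "'a::real_normed_vector \<Rightarrow> 'a"
  assumes lip: "\<forall>x\<in>K. \<forall>x'\<in>K. norm (f x - f x') \<le> L * norm (x - x')" and L: "0 \<le> L"
    and ab: "a \<le> b" "(b - a) * L < 1"
    and u: "\<forall>t\<in>{a..b}. u t \<in> K \<and> (u has_vector_derivative f (u t)) (at t within {a..b})"
    and w: "\<forall>t\<in>{a..b}. w t \<in> K \<and> (w has_vector_derivative f (w t)) (at t within {a..b})"
    and ua: "u a = w a"
  shows "\<forall>t\<in>{a..b}. u t = w t"
proof -
  define e where "e = (\<lambda>t. u t - w t)"
  have de: "(e has_vector_derivative (f (u t) - f (w t))) (at t within {a..b})" if "t \<in> {a..b}" for t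
    unfolding e_def using u w that by (intro has_vector_derivative_diff) auto
  have "continuous_on {a..b} e"
    unfolding continuous_on_eq_continuous_within using de has_vector_derivative_continuous by blast
  then have norm_e_cont: "continuous_on {a..b} (\<lambda>t. norm (e t))" by (intro continuous_intros)
  obtain tm where tm: "tm \<in> {a..b}" "\<forall>t\<in>{a..b}. norm (e t) \<le> norm (e tm)"
    using continuous_attains_sup[OF compact_Icc _ norm_e_cont] ab(1) by auto
  define M where "M = norm (e tm)"
  have M0: "0 \<le> M" unfolding M_def by simp
  have bound: "norm (e t - e a) \<le> (L * M) * norm (t - a)" if t: "t \<in> {a..b}" for t
  proof (rule differentiable_bound[of "{a..b}" e "\<lambda>x s. s *\<^sub>R (f (u x) - f (w x))"])
    show "convex {a..b}" by (rule convex_real_interval)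
    show "(e has_derivative (\<lambda>s. s *\<^sub>R (f (u x) - f (w x)))) (at x within {a..b})" if "x \<in> {a..b}" for x
      using de[OF that] unfolding has_vector_derivative_def .
    show "onorm (\<lambda>s. s *\<^sub>R (f (u x) - f (w x))) \<le> L * M" if x: "x \<in> {a..b}" for x
    proof -
      have "norm (f (u x) - f (w x)) \<le> L * norm (u x - w x)" using lip u w x by blast
      also have "\<dots> \<le> L * M" using tm(2) x L unfolding M_def e_def by (simp add: mult_left_mono)
      finally show ?thesis
        using onorm_scaleR_left[OF bounded_linear_ident, of "f (u x) - f (w x)"] by (simp add: onorm_id)
    qed
    show "t \<in> {a..b}" "a \<in> {a..b}" using t ab by auto
  qed
  have "M \<le> (L * M) * (b - a)"
  proof -
    have "M \<le> (L * M) * norm (tm - a)" using bound[OF tm(1)] ua unfolding M_def e_def by simp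
    also have "\<dots> \<le> (L * M) * (b - a)" using tm(1) L M0 by (intro mult_left_mono) auto
    finally show ?thesis .
  qed
  have "M = 0"
  proof (rule ccontr)
    assume "M \<noteq> 0"
    then have "(L * M) * (b - a) < M * 1"
      using M0 ab(2) by (simp add: mult.commute mult.left_commute mult_strict_left_mono)
    with \<open>M \<le> (L * M) * (b - a)\<close> show False by simp
  qed
  then show ?thesis using tm(2) unfolding M_def e_def by auto
qed

text \<open>Continuity argument on \<open>[0, m)\<close>: a property that passes to the right endpoint of an
  initial segment on which it holds, and that always extends a little to the right, holds on
  all of \<open>[0, m)\<close>.  (Consider the infimum of the counterexamples.)\<close>

lemma real_interval_induct:
  fixes P :: "real \<Rightarrow> bool"
  assumes left: "\<And>t. 0 \<le> t \<Longrightarrow> t < m \<Longrightarrow> (\<forall>s\<in>{0..<t}. P s) \<Longrightarrow> P t"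
    and right: "\<And>t. 0 \<le> t \<Longrightarrow> t < m \<Longrightarrow> (\<forall>s\<in>{0..t}. P s) \<Longrightarrow> \<exists>e>0. \<forall>s\<in>{t..<t+e}. P s"
  shows "\<forall>t\<in>{0..<m}. P t"
proof (rule ccontr)
  define B where "B = {t\<in>{0..<m}. \<not> P t}"
  assume "\<not> (\<forall>t\<in>{0..<m}. P t)"
  then obtain b0 where b0: "b0 \<in> B" unfolding B_def by auto
  have B_bdd: "bdd_below B" unfolding B_def by (rule bdd_belowI[of _ 0]) auto
  define t1 where "t1 = Inf B"
  have "t1 \<le> b0" unfolding t1_def by (rule cInf_lower[OF b0 B_bdd])
  then have t1: "0 \<le> t1" "t1 < m"
    using b0 unfolding t1_def B_def by (auto intro!: cInf_greatest)
  have below: "P s" if s: "s \<in> {0..<t1}" for s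
  proof (rule ccontr)
    assume "\<not> P s"
    then have "s \<in> B" using s t1 unfolding B_def by auto
    then have "t1 \<le> s" unfolding t1_def by (rule cInf_lower[OF _ B_bdd])
    then show False using s by auto
  qed
  have "P t1" using left[OF t1] below by blast
  with below have "\<forall>s\<in>{0..t1}. P s" by (metis atLeastAtMost_iff atLeastLessThan_iff order_le_less)
  then obtain e where e: "e > 0" "\<forall>s\<in>{t1..<t1+e}. P s" using right[OF t1] by blast
  have "Inf B < t1 + e" using e(1) unfolding t1_def by simp
  then obtain b where b: "b \<in> B" "b < t1 + e"
    using cInf_less_iff[OF _ B_bdd] b0 by blast
  have "t1 \<le> b" unfolding t1_def by (rule cInf_lower[OF b(1) B_bdd])
  with b e(2) show False unfolding B_def by auto
qed

lemma continuous_left_limit_eq: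
  fixes f g :: "real \<Rightarrow> 'a::metric_space"
  assumes t1: "0 < t1" and f: "continuous (at t1 within {0..t1}) f" and g: "continuous (at t1 within {0..t1}) g"
    and eq: "\<forall>s\<in>{0..<t1}. f s = g s"
  shows "f t1 = g t1"
proof -
  have F: "at t1 within {0..t1} = at_left t1" by (rule at_within_Icc_at_left[OF t1])
  have lf: "(f \<longlongrightarrow> f t1) (at_left t1)" and lg: "(g \<longlongrightarrow> g t1) (at_left t1)"
    using f g unfolding continuous_within F by auto
  have "\<forall>\<^sub>F s in at_left t1. f s = g s"
    using eventually_at_left_real[OF t1] by eventually_elim (use eq in auto)
  then have "(g \<longlongrightarrow> f t1) (at_left t1)" using tendsto_cong lf by blast
  then show ?thesis using tendsto_unique[OF trivial_limit_at_left_real lg] by simp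
qed

text \<open>The competitor \<open>(y2, p2)\<close> is only known to satisfy the algebraic
  relation \<open>p2 = G y2\<close> and the ODE while it stays in the region \<open>y2 \<in> \<Omega>, \<bar>p2\<bar> < K\<close>;
  since \<open>\<bar>G\<bar> < K\<close> on \<open>\<Omega>\<close>, agreement with \<open>y1\<close> keeps it inside that region.
  Forward step: agreement at a time \<open>t1\<close> propagates to a short interval to the right, by
  continuity and local Lipschitz uniqueness.\<close>

lemma constrained_ode_forward_step:
  fixes f :: "'a::euclidean_space \<Rightarrow> 'a" and G :: "'a \<Rightarrow> real"
  assumes \<Omega>: "open \<Omega>" and f: "C1 \<Omega> f" and GK: "\<forall>y\<in>\<Omega>. \<bar>G y\<bar> < K"
    and y1: "\<forall>t\<in>{0..h}. y1 t \<in> \<Omega> \<and> (y1 has_vector_derivative f (y1 t)) (at t within {0..h})"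
    and y2c: "continuous_on {0..<T'} y2" and p2c: "continuous_on {0..<T'} p2"
    and y2: "\<forall>t\<in>{0..<T'}. y2 t \<in> \<Omega> \<and> \<bar>p2 t\<bar> < K \<longrightarrow>
               p2 t = G (y2 t) \<and> (y2 has_vector_derivative f (y2 t)) (at t within {0..<T'})"
    and t1: "0 \<le> t1" "t1 < min h T'" and at_t1: "y2 t1 = y1 t1" "p2 t1 = G (y1 t1)"
  shows "\<exists>e>0. \<forall>t\<in>{t1..<t1+e}. y2 t = y1 t \<and> p2 t = G (y1 t)"
proof -
  define m where "m = min h T'"
  have sub_h: "{0..<m} \<subseteq> {0..h}" and sub_T: "{0..<m} \<subseteq> {0..<T'}" unfolding m_def by auto
  have t1m: "t1 \<in> {0..<m}" using t1 unfolding m_def by auto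
  have ps: "y1 t1 \<in> \<Omega>" using y1 t1m sub_h by blast
  obtain \<rho> L where \<rho>: "\<rho> > 0" "L > 0" "cball (y1 t1) \<rho> \<subseteq> \<Omega>"
    and lip: "\<forall>x\<in>cball (y1 t1) \<rho>. \<forall>x'\<in>cball (y1 t1) \<rho>. norm (f x - f x') \<le> L * norm (x - x')"
    using C1_locally_lipschitz[OF \<Omega> f ps] by blast
  have y1c: "continuous_on {0..h} y1"
    unfolding continuous_on_eq_continuous_within using y1 has_vector_derivative_continuous by blast
  \<comment> \<open>By continuity, near \<open>t1\<close> both trajectories stay in the ball and \<open>\<bar>p2\<bar> < K\<close>.\<close>
  have "continuous (at t1 within {0..<m}) y2" "continuous (at t1 within {0..<m}) y1"
    "continuous (at t1 within {0..<m}) p2"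
    using continuous_on_subset[OF y2c sub_T] continuous_on_subset[OF y1c sub_h]
      continuous_on_subset[OF p2c sub_T] t1m
    by (auto simp: continuous_on_eq_continuous_within)
  then obtain d1 d2 d3
    where d1: "d1 > 0" "\<forall>t\<in>{0..<m}. dist t t1 < d1 \<longrightarrow> dist (y2 t) (y2 t1) < \<rho>"
      and d2: "d2 > 0" "\<forall>t\<in>{0..<m}. dist t t1 < d2 \<longrightarrow> dist (y1 t) (y1 t1) < \<rho>"
      and d3: "d3 > 0" "\<forall>t\<in>{0..<m}. dist t t1 < d3 \<longrightarrow> dist (p2 t) (p2 t1) < K - \<bar>p2 t1\<bar>"
    using \<rho>(1) GK ps at_t1 unfolding continuous_within_eps_delta by (metis diff_gt_0_iff_gt)
  define e where "e = min (min (d1/2) (d2/2)) (min (d3/2) (min ((m - t1)/2) (1 / (2 * L))))"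
  have e_pos: "e > 0" using d1 d2 d3 t1m \<rho>(2) unfolding e_def by simp
  have "e \<le> 1 / (2 * L)" unfolding e_def by simp
  then have e_short: "(t1 + e - t1) * L < 1" using \<rho>(2) by (simp add: field_simps)
  have "e \<le> (m - t1)/2" unfolding e_def by linarith
  then have e_sub: "{t1..t1+e} \<subseteq> {0..<m}" using t1m by auto
  have close: "t \<in> {0..<m}" "dist t t1 < d1" "dist t t1 < d2" "dist t t1 < d3"
    if "t \<in> {t1..t1+e}" for t
    using that e_sub d1(1) d2(1) d3(1) unfolding e_def dist_real_def by auto
  have in_ball: "y1 t \<in> cball (y1 t1) \<rho>" "y2 t \<in> cball (y1 t1) \<rho>" "\<bar>p2 t\<bar> < K"
    if "t \<in> {t1..t1+e}" for t
  proof -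
    have "dist (y1 t) (y1 t1) < \<rho>" using d2(2) close[OF that] by blast
    then show "y1 t \<in> cball (y1 t1) \<rho>" by (simp add: dist_commute)
    have "dist (y2 t) (y2 t1) < \<rho>" using d1(2) close[OF that] by blast
    then show "y2 t \<in> cball (y1 t1) \<rho>" using at_t1 by (simp add: dist_commute)
    have "dist (p2 t) (p2 t1) < K - \<bar>p2 t1\<bar>" using d3(2) close[OF that] by blast
    then show "\<bar>p2 t\<bar> < K" unfolding dist_real_def by linarith
  qed
  have ode_on: "y2 t \<in> \<Omega> \<and> \<bar>p2 t\<bar> < K" if "t \<in> {t1..t1+e}" for t
    using in_ball[OF that] \<rho>(3) by blast
  have "\<forall>t\<in>{t1..t1+e}. y1 t = y2 t"
  proof (rule lipschitz_ode_unique_short[OF lip less_imp_le[OF \<rho>(2)]])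
    show "t1 \<le> t1 + e" "(t1 + e - t1) * L < 1" using e_pos e_short by auto
    show "\<forall>t\<in>{t1..t1+e}. y1 t \<in> cball (y1 t1) \<rho> \<and>
                          (y1 has_vector_derivative f (y1 t)) (at t within {t1..t1+e})"
      using in_ball y1 e_sub sub_h by (meson has_vector_derivative_within_subset subset_trans subsetD)
    show "\<forall>t\<in>{t1..t1+e}. y2 t \<in> cball (y1 t1) \<rho> \<and>
                          (y2 has_vector_derivative f (y2 t)) (at t within {t1..t1+e})"
      using in_ball y2 ode_on e_sub sub_T by (meson has_vector_derivative_within_subset subset_trans subsetD)
    show "y1 t1 = y2 t1" using at_t1 by simp
  qed
  moreover have "p2 t = G (y2 t)" if "t \<in> {t1..t1+e}" for t
    using y2 ode_on[OF that] e_sub sub_T that by blast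
  ultimately show ?thesis using e_pos by (intro exI[of _ e]) auto
qed

text \<open>Hence the competitor agrees with the reference solution as long as both are defined: the
  agreement set is closed from the left and, by the forward step, open to the right.\<close>

lemma constrained_ode_uniqueness:
  fixes f :: "'a::euclidean_space \<Rightarrow> 'a" and G :: "'a \<Rightarrow> real"
  assumes \<Omega>: "open \<Omega>" and f: "C1 \<Omega> f" and Gc: "continuous_on \<Omega> G" and GK: "\<forall>y\<in>\<Omega>. \<bar>G y\<bar> < K"
    and y1: "\<forall>t\<in>{0..h}. y1 t \<in> \<Omega> \<and> (y1 has_vector_derivative f (y1 t)) (at t within {0..h})"
    and y2c: "continuous_on {0..<T'} y2" and p2c: "continuous_on {0..<T'} p2"
    and y2: "\<forall>t\<in>{0..<T'}. y2 t \<in> \<Omega> \<and> \<bar>p2 t\<bar> < K \<longrightarrow>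
               p2 t = G (y2 t) \<and> (y2 has_vector_derivative f (y2 t)) (at t within {0..<T'})"
    and init: "y2 0 = y1 0" "p2 0 = G (y1 0)"
  shows "\<forall>t\<in>{0..<min h T'}. y2 t = y1 t \<and> p2 t = G (y1 t)"
proof (rule real_interval_induct)
  fix t1 assume t1: "0 \<le> t1" "t1 < min h T'" and below: "\<forall>s\<in>{0..<t1}. y2 s = y1 s \<and> p2 s = G (y1 s)"
  show "y2 t1 = y1 t1 \<and> p2 t1 = G (y1 t1)"
  proof (cases "t1 = 0")
    case True then show ?thesis using init by simp
  next
    case False
    have sub_T: "{0..t1} \<subseteq> {0..<T'}" and sub_h: "{0..t1} \<subseteq> {0..h}" using t1 by auto
    have y1c: "continuous_on {0..h} y1"
      unfolding continuous_on_eq_continuous_within using y1 has_vector_derivative_continuous by blast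
    have Gy1c: "continuous_on {0..h} (\<lambda>t. G (y1 t))"
      using continuous_on_compose2[OF Gc y1c] y1 by blast
    have "continuous (at t1 within {0..t1}) y2" "continuous (at t1 within {0..t1}) y1"
      "continuous (at t1 within {0..t1}) p2" "continuous (at t1 within {0..t1}) (\<lambda>t. G (y1 t))"
      using continuous_on_subset[OF y2c sub_T] continuous_on_subset[OF y1c sub_h]
        continuous_on_subset[OF p2c sub_T] continuous_on_subset[OF Gy1c sub_h] t1
      by (auto simp: continuous_on_eq_continuous_within)
    then show ?thesis
      using continuous_left_limit_eq[of t1 y2 y1] continuous_left_limit_eq[of t1 p2 "\<lambda>t. G (y1 t)"]
        below False t1 by auto
  qed
next
  fix t1 assume "0 \<le> t1" "t1 < min h T'" "\<forall>s\<in>{0..t1}. y2 s = y1 s \<and> p2 s = G (y1 s)"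
  then show "\<exists>e>0. \<forall>s\<in>{t1..<t1+e}. y2 s = y1 s \<and> p2 s = G (y1 s)"
    using constrained_ode_forward_step[OF \<Omega> f GK y1 y2c p2c y2] by auto
qed

section \<open>Submanifolds parametrized over an open set\<close>

text \<open>The image of an open set under a \<open>C\<^sup>1\<close> map that has a bounded linear left inverse is
  an embedded submanifold: the left inverse provides the continuous inverse of the chart,
  and differentiating \<open>g \<circ> \<psi> = id\<close> shows that \<open>\<psi>\<close> is an immersion.\<close>

lemma submanifold_by_linear_retraction:
  fixes \<psi> :: "'k::euclidean_space \<Rightarrow> 'a::euclidean_space"
  assumes W: "open W" and \<psi>: "C1 W \<psi>" and g: "bounded_linear g"
    and left_inverse: "\<forall>w\<in>W. g (\<psi> w) = w" and M: "M = \<psi> ` W"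
  shows "submanifold_dim TYPE('k) M"
proof -
  obtain D where D: "C1_deriv W \<psi> D" using \<psi> unfolding C1_def by blast
  have immersion: "inj (frechet_derivative \<psi> (at w))" if w: "w \<in> W" for w
  proof -
    have "((\<lambda>x. g (\<psi> x)) has_derivative (\<lambda>h. g (D w h))) (at w)"
      by (rule bounded_linear.has_derivative[OF g C1_derivD[OF D w]])
    then have "((\<lambda>x. x) has_derivative (\<lambda>h. g (D w h))) (at w)"
      by (rule has_derivative_transform_within_open[OF _ W w]) (use left_inverse in auto)
    then have "(\<lambda>h. g (D w h)) = (\<lambda>h. h)" using has_derivative_unique[OF _ has_derivative_ident] by blast
    then have "inj (D w)" by (metis injI)
    then show ?thesis using frechet_derivative_at[OF C1_derivD[OF D w]] by simp
  qed
  have "homeomorphism W (M \<inter> UNIV) \<psi> g"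
    unfolding homeomorphism_def
  proof (intro conjI)
    show "continuous_on W \<psi>" by (rule C1_continuous_on[OF \<psi>])
    show "continuous_on (M \<inter> UNIV) g" by (rule linear_continuous_on[OF g])
    show "g ` (M \<inter> UNIV) = W" using M left_inverse by force
  qed (use M left_inverse in auto)
  then show ?thesis
    unfolding submanifold_dim_def using W C1_imp_C1_on[OF \<psi>] immersion
    by (intro ballI exI[of _ UNIV] exI[of _ W] exI[of _ \<psi>] exI[of _ g]) auto
qed

section \<open>The pump-leak model: the constraint surface\<close>

lemma C1_mu:
  fixes cf :: "'a::real_normed_vector \<Rightarrow> real^'n"
  assumes "C1 S cf" "C1 S phf" "\<And>x. x \<in> S \<Longrightarrow> pos_vec (cf x)" "\<forall>k. 0 < ce $ k"
  shows "C1 S (\<lambda>x. mu z ce (cf x) (phf x))"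
  unfolding mu_def
proof (intro C1_vec C1_add C1_mult C1_const assms(2))
  fix k
  have "bounded_linear (\<lambda>c::real^'n. c $ k / ce $ k)"
    using bounded_linear_compose[OF bounded_linear_divide[of "ce $ k"] bounded_linear_vec_nth[of k]] by simp
  then show "C1 S (\<lambda>x. ln (cf x $ k / ce $ k))"
    by (intro C1_ln C1_compose[OF assms(1) C1_linear]) (use assms(3,4) in \<open>auto simp: pos_vec_def\<close>)
qed

text \<open>The ionic current \<open>I\<^sub>\<alpha>\<close> as a function of \<open>((c, \<alpha>), \<phi>)\<close>; the potential \<open>\<phi>\<close> is the
  variable to be solved for.\<close>

definition current_map :: "real^'n \<Rightarrow> real^'n \<Rightarrow> (real \<Rightarrow> real^'n \<Rightarrow> real^'n) \<Rightarrow> (real \<Rightarrow> real^'n \<Rightarrow> real^'n)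
   \<Rightarrow> ((real^'n) \<times> real) \<times> real \<Rightarrow> real"
  where "current_map z ce j p w = I_alpha z ce j p (snd (fst w)) (fst (fst w)) (snd w)"

locale pump_leak =
  fixes z ce :: "real^'n" and j p :: "real \<Rightarrow> real^'n \<Rightarrow> real^'n"
  assumes z_nonzero: "z \<noteq> 0"
    and ce_pos: "\<forall>k. 0 < ce $ k"
    and j_C1: "C1_on UNIV (\<lambda>(\<phi>, \<mu>). j \<phi> \<mu>)"
    and p_C1: "C1_on {(\<phi>, c). pos_vec c} (\<lambda>(\<phi>, c). p \<phi> c)"
    and j_zero: "\<forall>\<phi>. j \<phi> 0 = 0"
    and j_deriv_pos: "\<forall>\<phi> x. x \<noteq> 0 \<longrightarrow> 0 < x \<bullet> (matrix (frechet_derivative (j \<phi>) (at 0)) *v x)"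
begin

lemma current_map_C1: "C1 {w. pos_vec (fst (fst w))} (current_map z ce j p)"
proof -
  let ?S = "{w::((real^'n) \<times> real) \<times> real. pos_vec (fst (fst w))}"
  have c: "C1 ?S (\<lambda>w. fst (fst w))" and \<alpha>: "C1 ?S (\<lambda>w. snd (fst w))" and \<phi>: "C1 ?S (\<lambda>w. snd w)"
    by (intro C1_linear bounded_linear_compose[OF bounded_linear_fst bounded_linear_fst]
        bounded_linear_compose[OF bounded_linear_snd bounded_linear_fst] bounded_linear_snd)+
  have J: "C1 ?S (\<lambda>w. (\<lambda>(\<phi>, \<mu>). j \<phi> \<mu>) (snd w, mu z ce (fst (fst w)) (snd w)))"
    by (rule C1_compose[OF C1_Pair[OF \<phi> C1_mu[OF c \<phi> _ ce_pos]] C1_on_imp_C1[OF j_C1]]) auto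
  have P: "C1 ?S (\<lambda>w. (\<lambda>(\<phi>, c). p \<phi> c) (snd w, fst (fst w)))"
    by (rule C1_compose[OF C1_Pair[OF \<phi> c] C1_on_imp_C1[OF p_C1]]) auto
  have "C1 ?S (\<lambda>w. z \<bullet> ((\<lambda>(\<phi>, \<mu>). j \<phi> \<mu>) (snd w, mu z ce (fst (fst w)) (snd w))
              + snd (fst w) *\<^sub>R (\<lambda>(\<phi>, c). p \<phi> c) (snd w, fst (fst w))))"
    by (rule C1_compose[OF C1_add[OF J C1_scaleR[OF \<alpha> P]] C1_linear[OF bounded_linear_inner_right]]) auto
  then show ?thesis unfolding current_map_def I_alpha_def by simp
qed

lemma mu_equilibrium: "mu z ce ce \<phi> = \<phi> *\<^sub>R z"
  using ce_pos by (simp add: mu_def vec_eq_iff less_imp_neq[symmetric] mult.commute)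

text \<open>Key nondegeneracy: at the equilibrium \<open>(c, \<alpha>, \<phi>) = (c\<^sup>e, 0, 0)\<close> the current depends on
  \<open>\<phi>\<close> with slope \<open>\<langle>z, J z\<rangle> > 0\<close>, \<open>J\<close> the (positive definite) Jacobian of \<open>j(0, \<cdot>)\<close> at
  \<open>0\<close>; the \<open>\<phi>\<close>-dependence of \<open>j\<close> itself does not contribute since \<open>j(\<phi>, 0) = 0\<close>.\<close>

lemma current_map_dphi_pos:
  assumes DF: "C1_deriv {w. pos_vec (fst (fst w))} (current_map z ce j p) DF"
  shows "DF ((ce, 0), 0) ((0, 0), 1) > 0"
proof -
  let ?J = "\<lambda>(\<phi>, \<mu>). j \<phi> \<mu>"
  let ?w0 = "((ce, 0::real), 0::real)"
  obtain Dj where Dj: "C1_deriv UNIV ?J Dj" using C1_on_imp_C1[OF j_C1] unfolding C1_def by blast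
  have dJ: "(?J has_derivative Dj (0, 0)) (at (0, 0))" using C1_derivD[OF Dj] by simp
  have Dj_lin: "bounded_linear (Dj (0, 0))" using C1_deriv_bounded_linear[OF Dj] by simp
  \<comment> \<open>Along \<open>c = c\<^sup>e, \<alpha> = 0\<close> the current is \<open>\<phi> \<mapsto> \<langle>z, j(\<phi>, \<phi> z)\<rangle>\<close>.\<close>
  have w0S: "?w0 \<in> {w. pos_vec (fst (fst w))}" using ce_pos by (simp add: pos_vec_def)
  have r1: "((\<lambda>\<phi>. current_map z ce j p ((ce, 0), \<phi>)) has_derivative (\<lambda>s. DF ?w0 ((0, 0), s))) (at 0)"
    using diff_chain_at[OF has_derivative_Pair[OF has_derivative_const has_derivative_ident] C1_derivD[OF DF w0S]]
    by (simp add: o_def zero_prod_def)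
  have "((\<lambda>\<phi>::real. (\<phi>, \<phi> *\<^sub>R z)) has_derivative (\<lambda>s. (s, s *\<^sub>R z))) (at 0)"
    by (intro derivative_eq_intros) auto
  from diff_chain_at[OF this, of ?J "Dj (0, 0)"] dJ
  have "((\<lambda>\<phi>. ?J (\<phi>, \<phi> *\<^sub>R z)) has_derivative (\<lambda>s. Dj (0, 0) (s, s *\<^sub>R z))) (at 0)"
    by (simp add: o_def)
  from bounded_linear.has_derivative[OF bounded_linear_inner_right this]
  have r2: "((\<lambda>\<phi>. current_map z ce j p ((ce, 0), \<phi>)) has_derivative (\<lambda>s. z \<bullet> Dj (0, 0) (s, s *\<^sub>R z))) (at 0)"
    by (simp add: current_map_def I_alpha_def mu_equilibrium)
  have "(\<lambda>s. DF ?w0 ((0, 0), s)) = (\<lambda>s. z \<bullet> Dj (0, 0) (s, s *\<^sub>R z))"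
    by (rule has_derivative_unique[OF r1 r2])
  from fun_cong[OF this, of 1] have slope: "DF ?w0 ((0, 0), 1) = z \<bullet> Dj (0, 0) (1, z)" by simp
  have "((\<lambda>\<phi>::real. ?J (\<phi>, 0)) has_derivative (\<lambda>s. Dj (0, 0) (s, 0))) (at 0)"
    using diff_chain_at[OF has_derivative_Pair[OF has_derivative_ident has_derivative_const] dJ]
    by (simp add: o_def)
  then have "((\<lambda>\<phi>::real. 0::real^'n) has_derivative (\<lambda>s. Dj (0, 0) (s, 0))) (at 0)"
    using j_zero by simp
  then have "(\<lambda>s. Dj (0, 0) (s, 0)) = (\<lambda>s::real. 0)"
    by (rule has_derivative_unique[OF _ has_derivative_const])
  from fun_cong[OF this, of 1] have dphi_zero: "Dj (0, 0) (1, 0) = 0" by simp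
  have "((\<lambda>\<mu>. ?J (0, \<mu>)) has_derivative (\<lambda>w. Dj (0, 0) (0, w))) (at 0)"
    using diff_chain_at[OF has_derivative_Pair[OF has_derivative_const has_derivative_ident] dJ]
    by (simp add: o_def)
  then have dmu: "(j 0 has_derivative (\<lambda>w. Dj (0, 0) (0, w))) (at 0)" by simp
  have "frechet_derivative (j 0) (at 0) = (\<lambda>w. Dj (0, 0) (0, w))"
    using frechet_derivative_at[OF dmu] by simp
  then have "0 < z \<bullet> (matrix (\<lambda>w. Dj (0, 0) (0, w)) *v z)"
    using j_deriv_pos z_nonzero by metis
  then have pos: "0 < z \<bullet> Dj (0, 0) (0, z)"
    using has_derivative_bounded_linear[OF dmu] by (simp add: matrix_works bounded_linear.linear)
  have "Dj (0, 0) (1, z) = Dj (0, 0) (1, 0) + Dj (0, 0) (0, z)"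
    using linear_add[OF bounded_linear.linear[OF Dj_lin], of "(1, 0)" "(0, z)"] by simp
  then show ?thesis using slope dphi_zero pos by simp
qed

lemma near_equilibrium_pos: "\<exists>r>0. \<forall>c. norm (c - ce) < r \<longrightarrow> pos_vec c"
proof -
  define r where "r = Min (range (\<lambda>k. ce $ k))"
  have "r > 0" unfolding r_def using ce_pos by (simp add: Min_gr_iff)
  moreover have "pos_vec c" if "norm (c - ce) < r" for c
    unfolding pos_vec_def
  proof
    fix k
    have "\<bar>c $ k - ce $ k\<bar> < r" using component_le_norm_cart[of "c - ce" k] that by simp
    moreover have "r \<le> ce $ k" unfolding r_def by (simp add: Min_le)
    ultimately show "0 < c $ k" by (simp add: abs_less_iff)
  qed
  ultimately show ?thesis by blast
qed

text \<open>The cylinder radius \<open>K\<close> is chosen so small that it only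
  contains positive concentrations and lies in the uniqueness strip.\<close>

lemma current_zero_set_is_graph:
  obtains K K\<alpha> \<Phi> where "K > 0" "K\<alpha> > 0"
    "C1 {(c, \<alpha>). norm (c - ce) < K \<and> \<bar>\<alpha>\<bar> < K\<alpha>} \<Phi>"
    "\<forall>c \<alpha>. norm (c - ce) < K \<and> \<bar>\<alpha>\<bar> < K\<alpha> \<longrightarrow> I_alpha z ce j p \<alpha> c (\<Phi> (c, \<alpha>)) = 0"
    "\<forall>c \<alpha> \<phi>. norm (c - ce) < K \<and> \<bar>\<alpha>\<bar> < K\<alpha> \<and> \<bar>\<phi>\<bar> < K \<and> I_alpha z ce j p \<alpha> c \<phi> = 0 \<longrightarrow> \<phi> = \<Phi> (c, \<alpha>)"
    "\<forall>c. norm (c - ce) < K \<longrightarrow> pos_vec c"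
proof -
  let ?S = "{w::((real^'n) \<times> real) \<times> real. pos_vec (fst (fst w))}"
  obtain DF where DF: "C1_deriv ?S (current_map z ce j p) DF"
    using current_map_C1 unfolding C1_def by blast
  have "?S = (\<Inter>k. {w. 0 < fst (fst w) $ k})" by (auto simp: pos_vec_def)
  moreover have "open {w::((real^'n) \<times> real) \<times> real. 0 < fst (fst w) $ k}" for k
    by (intro open_Collect_less continuous_intros)
  ultimately have S_open: "open ?S" by (auto intro: open_INT)
  have eq: "((ce, 0), 0) \<in> ?S" "current_map z ce j p ((ce, 0), 0) = 0"
    using ce_pos j_zero by (simp_all add: pos_vec_def current_map_def I_alpha_def mu_equilibrium)
  have "DF ((ce, 0), 0) (0, 1) \<noteq> 0"
    using current_map_dphi_pos[OF DF] by (simp add: zero_prod_def)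
  then obtain U \<delta> \<Phi> where U: "open U" "(ce, 0) \<in> U" and \<delta>: "\<delta> > 0" and \<Phi>: "C1 U \<Phi>"
    and solves: "\<forall>x\<in>U. \<bar>\<Phi> x - 0\<bar> < \<delta> \<and> current_map z ce j p (x, \<Phi> x) = 0"
    and unique: "\<forall>x\<in>U. \<forall>y. \<bar>y - 0\<bar> < \<delta> \<and> current_map z ce j p (x, y) = 0 \<longrightarrow> y = \<Phi> x"
    using implicit_function[OF S_open DF eq] by blast
  obtain \<epsilon> where \<epsilon>: "\<epsilon> > 0" "ball (ce, 0) \<epsilon> \<subseteq> U" using U openE by blast
  obtain r where r: "r > 0" "\<forall>c. norm (c - ce) < r \<longrightarrow> pos_vec c" using near_equilibrium_pos by blast
  define K where "K = min (\<epsilon>/2) (min \<delta> r)"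
  define K\<alpha> where "K\<alpha> = \<epsilon>/2"
  have K: "K > 0" "K\<alpha> > 0" unfolding K_def K\<alpha>_def using \<epsilon> \<delta> r by auto
  have box_U: "(c, \<alpha>) \<in> U" if "norm (c - ce) < K" "\<bar>\<alpha>\<bar> < K\<alpha>" for c \<alpha>
    using Pair_mem_ball[of c ce "\<epsilon>/2" \<alpha> 0 "\<epsilon>/2"] that \<epsilon>(2)
    unfolding K_def K\<alpha>_def by (auto simp: dist_norm)
  have "C1 {(c, \<alpha>). norm (c - ce) < K \<and> \<bar>\<alpha>\<bar> < K\<alpha>} \<Phi>"
    by (rule C1_subset[OF \<Phi>]) (use box_U in auto)
  moreover have "\<forall>c \<alpha>. norm (c - ce) < K \<and> \<bar>\<alpha>\<bar> < K\<alpha> \<longrightarrow> I_alpha z ce j p \<alpha> c (\<Phi> (c, \<alpha>)) = 0"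
  proof (intro allI impI)
    fix c \<alpha> assume "norm (c - ce) < K \<and> \<bar>\<alpha>\<bar> < K\<alpha>"
    then show "I_alpha z ce j p \<alpha> c (\<Phi> (c, \<alpha>)) = 0"
      using solves box_U[of c \<alpha>] by (auto simp: current_map_def)
  qed
  moreover have "\<forall>c \<alpha> \<phi>. norm (c - ce) < K \<and> \<bar>\<alpha>\<bar> < K\<alpha> \<and> \<bar>\<phi>\<bar> < K \<and> I_alpha z ce j p \<alpha> c \<phi> = 0
                   \<longrightarrow> \<phi> = \<Phi> (c, \<alpha>)"
  proof (intro allI impI)
    fix c \<alpha> \<phi> assume "norm (c - ce) < K \<and> \<bar>\<alpha>\<bar> < K\<alpha> \<and> \<bar>\<phi>\<bar> < K \<and> I_alpha z ce j p \<alpha> c \<phi> = 0"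
    moreover have "K \<le> \<delta>" unfolding K_def by simp
    ultimately show "\<phi> = \<Phi> (c, \<alpha>)"
      using unique box_U[of c \<alpha>] by (auto simp: current_map_def)
  qed
  moreover have "\<forall>c. norm (c - ce) < K \<longrightarrow> pos_vec c" using r unfolding K_def by auto
  ultimately show ?thesis using that K by blast
qed

end

lemma Qf_inner: "Qf z zA A c v = z \<bullet> c + zA * A / v"
  by (simp add: Qf_def inner_vec_def)

text \<open>Solving the electroneutrality condition \<open>x + a / v = 0\<close> (with \<open>x = \<langle>z, c\<rangle>\<close>,
  \<open>a = z A\<close>) for the volume \<open>v > 0\<close>.\<close>

lemma electroneutral_volume:
  fixes a x v :: real
  assumes "a \<noteq> 0"
  shows "(0 < v \<and> x + a / v = 0) \<longleftrightarrow> (a * x < 0 \<and> v = - a / x)"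
proof
  assume v: "0 < v \<and> x + a / v = 0"
  then have "x = - (a / v)" by linarith
  then have x: "x = - a / v" by simp
  have "a * x = - (a * a) / v" using x by simp
  moreover have "0 < a * a" using assms by (auto simp: zero_less_mult_iff linorder_neq_iff)
  ultimately have ax: "a * x < 0" using v by (simp add: divide_pos_pos)
  then have "x \<noteq> 0" by auto
  with x v have "v = - a / x" by (auto simp: field_simps)
  with ax show "a * x < 0 \<and> v = - a / x" by blast
next
  assume ax: "a * x < 0 \<and> v = - a / x"
  then have "x \<noteq> 0" by auto
  have "a / x < 0" using ax by (simp add: divide_less_0_iff mult_less_0_iff)
  with ax have v: "0 < v" by linarith
  moreover have "x + a / v = 0" using ax v \<open>x \<noteq> 0\<close> assms by (simp add: field_simps)
  ultimately show "0 < v \<and> x + a / v = 0" by blast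
qed

locale pump_leak_slice = pump_leak z ce j p
  for z ce :: "real^'n" and j p :: "real \<Rightarrow> real^'n \<Rightarrow> real^'n" +
  fixes A zA :: real and jw :: "real \<Rightarrow> real" and K K\<alpha> :: real
    and \<Phi> :: "(real^'n) \<times> real \<Rightarrow> real" and \<alpha> :: real
  assumes A_pos: "0 < A"
    and jw_C1: "C1_on UNIV jw"
    and \<Phi>_C1: "C1 {(c, \<alpha>). norm (c - ce) < K \<and> \<bar>\<alpha>\<bar> < K\<alpha>} \<Phi>"
    and \<Phi>_solves: "\<forall>c \<alpha>. norm (c - ce) < K \<and> \<bar>\<alpha>\<bar> < K\<alpha> \<longrightarrow> I_alpha z ce j p \<alpha> c (\<Phi> (c, \<alpha>)) = 0"
    and \<Phi>_unique: "\<forall>c \<alpha> \<phi>. norm (c - ce) < K \<and> \<bar>\<alpha>\<bar> < K\<alpha> \<and> \<bar>\<phi>\<bar> < K \<and> I_alpha z ce j p \<alpha> c \<phi> = 0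
                     \<longrightarrow> \<phi> = \<Phi> (c, \<alpha>)"
    and near_pos: "\<forall>c. norm (c - ce) < K \<longrightarrow> pos_vec c"
    and \<alpha>_small: "\<bar>\<alpha>\<bar> < K\<alpha>"
begin

abbreviation "M \<equiv> Cyl ce K \<inter> Gamma z ce A zA j p \<alpha>"

lemma slice_eq:
  "M = {(c, v, \<phi>). norm (c - ce) < K \<and> 0 < v \<and> Qf z zA A c v = 0 \<and> \<bar>\<Phi> (c, \<alpha>)\<bar> < K \<and> \<phi> = \<Phi> (c, \<alpha>)}"
proof safe
  fix c v \<phi> assume h: "(c, v, \<phi>) \<in> Cyl ce K" "(c, v, \<phi>) \<in> Gamma z ce A zA j p \<alpha>"
  then have "\<phi> = \<Phi> (c, \<alpha>)" using \<Phi>_unique \<alpha>_small unfolding Cyl_def Gamma_def by auto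
  with h show "norm (c - ce) < K" "0 < v" "Qf z zA A c v = 0" "\<phi> = \<Phi> (c, \<alpha>)" "\<bar>\<Phi> (c, \<alpha>)\<bar> < K"
    unfolding Cyl_def Gamma_def by auto
next
  fix c v assume "norm (c - ce) < K" "0 < v" "Qf z zA A c v = 0" "\<bar>\<Phi> (c, \<alpha>)\<bar> < K"
  then show "(c, v, \<Phi> (c, \<alpha>)) \<in> Cyl ce K" "(c, v, \<Phi> (c, \<alpha>)) \<in> Gamma z ce A zA j p \<alpha>"
    using \<Phi>_solves \<alpha>_small near_pos unfolding Cyl_def Gamma_def by auto
qed

lemma \<Phi>\<alpha>_C1: "C1 {c. norm (c - ce) < K} (\<lambda>c. \<Phi> (c, \<alpha>))"
  by (rule C1_compose[OF C1_Pair[OF C1_ident C1_const] \<Phi>_C1]) (use \<alpha>_small in auto)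

lemma \<Phi>\<alpha>_continuous: "continuous_on {c. norm (c - ce) < K} (\<lambda>c. \<Phi> (c, \<alpha>))"
  by (rule C1_continuous_on[OF \<Phi>\<alpha>_C1])

lemma base_open: "open {c. norm (c - ce) < K \<and> \<bar>\<Phi> (c, \<alpha>)\<bar> < K}"
proof -
  have "{c::real^'n. norm (c - ce) < K} = ball ce K" by (auto simp: dist_norm norm_minus_commute)
  then have "open ({c. norm (c - ce) < K} \<inter> (\<lambda>c. \<Phi> (c, \<alpha>)) -` {x. \<bar>x\<bar> < K})"
    by (intro continuous_open_preimage[OF \<Phi>\<alpha>_continuous]) (auto simp: open_Collect_less continuous_intros)
  then show ?thesis by (simp add: Int_def)
qed

text \<open>Charged case \<open>z A \<noteq> 0\<close>: the surface is a graph over the concentrations \<open>c\<close>,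
  with \<open>v = - z A / \<langle>z, c\<rangle>\<close> and \<open>\<phi> = \<Phi>(c, \<alpha>)\<close>.\<close>

lemma slice_submanifold_charged:
  assumes zA: "zA \<noteq> 0"
  shows "submanifold_dim TYPE(real^'n) M"
proof -
  define a where "a = zA * A"
  have a: "a \<noteq> 0" unfolding a_def using zA A_pos by simp
  define W where "W = {c. norm (c - ce) < K \<and> \<bar>\<Phi> (c, \<alpha>)\<bar> < K} \<inter> (\<lambda>c. a * (z \<bullet> c)) -` {x. x < 0}"
  define \<psi> where "\<psi> = (\<lambda>c. (c, - a * inverse (z \<bullet> c), \<Phi> (c, \<alpha>)))"
  have W_open: "open W"
    unfolding W_def
    by (rule continuous_open_preimage[OF _ base_open]) (auto intro!: continuous_intros simp: open_Collect_less)
  have z_c: "z \<bullet> c \<noteq> 0" if "c \<in> W" for c using that unfolding W_def by auto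
  have \<psi>_C1: "C1 W \<psi>"
    unfolding \<psi>_def
    by (intro C1_Pair C1_ident C1_mult C1_const C1_inverse C1_linear[OF bounded_linear_inner_right]
        C1_subset[OF \<Phi>\<alpha>_C1] z_c) (auto simp: W_def)
  have M_eq: "M = \<psi> ` W"
  proof -
    have "0 < v \<and> Qf z zA A c v = 0 \<longleftrightarrow> a * (z \<bullet> c) < 0 \<and> v = - a * inverse (z \<bullet> c)" for c v
      using electroneutral_volume[OF a, of v "z \<bullet> c"] unfolding Qf_inner a_def
      by (simp add: divide_inverse mult.assoc)
    then show ?thesis unfolding slice_eq W_def \<psi>_def by (auto simp: image_def)
  qed
  show ?thesis
    by (rule submanifold_by_linear_retraction[OF W_open \<psi>_C1 bounded_linear_fst _ M_eq])
       (simp add: \<psi>_def)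
qed

text \<open>Neutral case \<open>z A = 0\<close>: the concentrations lie in the hyperplane \<open>\<langle>z, c\<rangle> = 0\<close> and
  \<open>v > 0\<close> is free.  Choosing \<open>k\<^sub>0\<close> with \<open>z\<^sub>k\<^sub>0 \<noteq> 0\<close>, the hyperplane is parametrized by
  projecting along the \<open>k\<^sub>0\<close>-th axis, and the freed coordinate carries \<open>v\<close>.\<close>

lemma slice_submanifold_neutral:
  assumes zA: "zA = 0"
  shows "submanifold_dim TYPE(real^'n) M"
proof -
  obtain k0 where k0: "z $ k0 \<noteq> 0" using z_nonzero by (metis vec_eq_iff zero_index)
  define e where "e = (axis k0 (1::real) :: real^'n)"
  have e: "e $ k0 = 1" "z \<bullet> e = z $ k0" unfolding e_def by (simp add: axis_def, simp add: inner_axis)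
  define Pm where "Pm = (\<lambda>w::real^'n. w - ((z \<bullet> w) / z $ k0) *\<^sub>R e)"
  have Pm_lin: "bounded_linear Pm" unfolding Pm_def
    by (intro bounded_linear_sub bounded_linear_ident bounded_linear_scaleR_const
        bounded_linear_compose[OF bounded_linear_divide bounded_linear_inner_right])
  have z_Pm: "z \<bullet> Pm w = 0" for w unfolding Pm_def using k0 by (simp add: inner_diff_right e)
  define V0 where "V0 = {c. norm (c - ce) < K \<and> \<bar>\<Phi> (c, \<alpha>)\<bar> < K}"
  define W where "W = {w. 0 < w $ k0} \<inter> Pm -` V0"
  define \<psi> where "\<psi> = (\<lambda>w. (Pm w, w $ k0, \<Phi> (Pm w, \<alpha>)))"
  define g where "g = (\<lambda>y::(real^'n) \<times> real \<times> real. fst y + (fst (snd y) - fst y $ k0) *\<^sub>R e)"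
  have g_lin: "bounded_linear g" unfolding g_def
    by (intro bounded_linear_add bounded_linear_fst bounded_linear_scaleR_const bounded_linear_sub
        bounded_linear_compose[OF bounded_linear_fst bounded_linear_snd]
        bounded_linear_compose[OF bounded_linear_vec_nth bounded_linear_fst])
  have W_open: "open W" unfolding W_def V0_def
    by (intro open_Int open_vimage[OF base_open linear_continuous_on[OF Pm_lin]])
       (simp add: open_Collect_less continuous_intros)
  have "C1 W \<psi>"
    unfolding \<psi>_def
    by (intro C1_Pair C1_linear[OF Pm_lin] C1_linear[OF bounded_linear_vec_nth]
        C1_compose[OF C1_linear[OF Pm_lin] \<Phi>\<alpha>_C1]) (auto simp: W_def V0_def)
  moreover have "\<forall>w\<in>W. g (\<psi> w) = w"
    unfolding g_def \<psi>_def Pm_def using e by simp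
  moreover have "M = \<psi> ` W"
  proof
    show "M \<subseteq> \<psi> ` W"
    proof
      fix y assume "y \<in> M"
      then obtain c v where y: "y = (c, v, \<Phi> (c, \<alpha>))" "c \<in> V0" "0 < v" "Qf z zA A c v = 0"
        unfolding slice_eq V0_def by auto
      have zc: "z \<bullet> c = 0" using y(4) zA unfolding Qf_inner by simp
      define w where "w = c + (v - c $ k0) *\<^sub>R e"
      have "Pm w = c" using k0 unfolding Pm_def w_def by (simp add: inner_add_right zc e)
      moreover have "w $ k0 = v" unfolding w_def by (simp add: e)
      ultimately have "y = \<psi> w" "w \<in> W" unfolding \<psi>_def W_def using y by auto
      then show "y \<in> \<psi> ` W" by blast
    qed
    show "\<psi> ` W \<subseteq> M"
      using z_Pm zA unfolding slice_eq W_def V0_def \<psi>_def Qf_inner by auto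
  qed
  ultimately show ?thesis by (rule submanifold_by_linear_retraction[OF W_open _ g_lin])
qed

lemma slice_submanifold: "submanifold_dim TYPE(real^'n) M"
  using slice_submanifold_charged slice_submanifold_neutral by blast

text \<open>On the surface the potential is \<open>\<phi> = \<Phi>(c, \<alpha>)\<close>, and expanding
  \<open>(v c)' = v c' + v' c\<close> with \<open>v' = - j\<^sub>w(\<pi>\<^sub>w)\<close> turns the pump-leak system into the ODE
  \<open>y' = F(y)\<close> for \<open>y = (c, v)\<close>, where \<open>F\<close> is the \<open>C\<^sup>1\<close> field below.\<close>

definition reduced_domain :: "((real^'n) \<times> real) set"
  where "reduced_domain = {y. norm (fst y - ce) < K \<and> 0 < snd y \<and> \<bar>\<Phi> (fst y, \<alpha>)\<bar> < K}"

definition reduced_field :: "(real^'n) \<times> real \<Rightarrow> (real^'n) \<times> real"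
  where "reduced_field y =
   (inverse (snd y) *\<^sub>R (jw (pi_w ce A (fst y) (snd y)) *\<^sub>R fst y
       - j (\<Phi> (fst y, \<alpha>)) (mu z ce (fst y) (\<Phi> (fst y, \<alpha>))) - \<alpha> *\<^sub>R p (\<Phi> (fst y, \<alpha>)) (fst y)),
    - jw (pi_w ce A (fst y) (snd y)))"

lemma reduced_domain_open: "open reduced_domain"
proof -
  let ?B = "{y::(real^'n) \<times> real. norm (fst y - ce) < K \<and> 0 < snd y}"
  have "open ?B" by (intro open_Collect_conj open_Collect_less continuous_intros)
  moreover have "continuous_on ?B (\<lambda>y. \<Phi> (fst y, \<alpha>))"
    by (rule continuous_on_compose2[OF \<Phi>\<alpha>_continuous continuous_on_fst[OF continuous_on_id]]) auto
  ultimately have "open (?B \<inter> (\<lambda>y. \<Phi> (fst y, \<alpha>)) -` {x. \<bar>x\<bar> < K})"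
    by (intro continuous_open_preimage) (auto simp: open_Collect_less continuous_intros)
  then show ?thesis unfolding reduced_domain_def by (simp add: Int_def conj_assoc)
qed

lemma reduced_potential_continuous: "continuous_on reduced_domain (\<lambda>y. \<Phi> (fst y, \<alpha>))"
  by (rule continuous_on_compose2[OF \<Phi>\<alpha>_continuous continuous_on_fst[OF continuous_on_id]])
     (auto simp: reduced_domain_def)

lemma reduced_field_C1: "C1 reduced_domain reduced_field"
proof -
  have c: "C1 reduced_domain (\<lambda>y::(real^'n) \<times> real. fst y)" by (rule C1_linear[OF bounded_linear_fst])
  have v: "C1 reduced_domain (\<lambda>y::(real^'n) \<times> real. snd y)" by (rule C1_linear[OF bounded_linear_snd])
  have \<phi>: "C1 reduced_domain (\<lambda>y. \<Phi> (fst y, \<alpha>))"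
    by (rule C1_compose[OF c \<Phi>\<alpha>_C1]) (auto simp: reduced_domain_def)
  have pos: "\<And>y. y \<in> reduced_domain \<Longrightarrow> pos_vec (fst y)" using near_pos by (auto simp: reduced_domain_def)
  have "C1 reduced_domain (\<lambda>y. (\<Sum>k\<in>UNIV. ce $ k) - ((\<Sum>k\<in>UNIV. fst y $ k) + A * inverse (snd y)))"
    by (intro C1_diff C1_const C1_add C1_sum C1_mult C1_inverse v
        C1_linear[OF bounded_linear_compose[OF bounded_linear_vec_nth bounded_linear_fst]])
       (auto simp: reduced_domain_def)
  then have "C1 reduced_domain (\<lambda>y. pi_w ce A (fst y) (snd y))"
    by (simp add: pi_w_def divide_inverse)
  then have W: "C1 reduced_domain (\<lambda>y. jw (pi_w ce A (fst y) (snd y)))"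
    by (rule C1_compose[OF _ C1_on_imp_C1[OF jw_C1]]) auto
  have J: "C1 reduced_domain (\<lambda>y. (\<lambda>(\<phi>, \<mu>). j \<phi> \<mu>) (\<Phi> (fst y, \<alpha>), mu z ce (fst y) (\<Phi> (fst y, \<alpha>))))"
    by (rule C1_compose[OF C1_Pair[OF \<phi> C1_mu[OF c \<phi> pos ce_pos]] C1_on_imp_C1[OF j_C1]]) auto
  have P: "C1 reduced_domain (\<lambda>y. (\<lambda>(\<phi>, c). p \<phi> c) (\<Phi> (fst y, \<alpha>), fst y))"
    by (rule C1_compose[OF C1_Pair[OF \<phi> c] C1_on_imp_C1[OF p_C1]]) (use pos in auto)
  have "C1 reduced_domain (\<lambda>y. (inverse (snd y) *\<^sub>R (jw (pi_w ce A (fst y) (snd y)) *\<^sub>R fst y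
       - (\<lambda>(\<phi>, \<mu>). j \<phi> \<mu>) (\<Phi> (fst y, \<alpha>), mu z ce (fst y) (\<Phi> (fst y, \<alpha>)))
       - \<alpha> *\<^sub>R (\<lambda>(\<phi>, c). p \<phi> c) (\<Phi> (fst y, \<alpha>), fst y)),
    - jw (pi_w ce A (fst y) (snd y))))"
    by (intro C1_Pair C1_scaleR C1_inverse v C1_diff W c J C1_const P C1_minus)
       (auto simp: reduced_domain_def)
  then show ?thesis unfolding reduced_field_def by simp
qed

lemma reduced_field_flux:
  assumes "0 < snd y"
  shows "snd y *\<^sub>R fst (reduced_field y) + snd (reduced_field y) *\<^sub>R fst y =
           - j (\<Phi> (fst y, \<alpha>)) (mu z ce (fst y) (\<Phi> (fst y, \<alpha>))) - \<alpha> *\<^sub>R p (\<Phi> (fst y, \<alpha>)) (fst y)"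
  using assms by (simp add: reduced_field_def algebra_simps)

definition reduced_solution :: "real \<Rightarrow> (real \<Rightarrow> (real^'n) \<times> real) \<Rightarrow> bool"
  where "reduced_solution h u \<longleftrightarrow> (\<forall>t\<in>{0..h}. u t \<in> reduced_domain \<and>
            (u has_vector_derivative reduced_field (u t)) (at t within {0..h}))"

lemma reduced_solution_product_derivative:
  assumes u: "reduced_solution h u" and t: "t \<in> {0..h}"
  shows "((\<lambda>t. snd (u t) *\<^sub>R fst (u t)) has_vector_derivative
           (- j (\<Phi> (fst (u t), \<alpha>)) (mu z ce (fst (u t)) (\<Phi> (fst (u t), \<alpha>)))
            - \<alpha> *\<^sub>R p (\<Phi> (fst (u t), \<alpha>)) (fst (u t)))) (at t within {0..h})"
proof -
  have du: "(u has_vector_derivative reduced_field (u t)) (at t within {0..h})" and ut: "u t \<in> reduced_domain"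
    using u t unfolding reduced_solution_def by auto
  from bounded_bilinear.has_vector_derivative[OF bounded_bilinear_scaleR
      bounded_linear.has_vector_derivative[OF bounded_linear_snd du]
      bounded_linear.has_vector_derivative[OF bounded_linear_fst du]]
  show ?thesis using reduced_field_flux[of "u t"] ut by (simp add: reduced_domain_def)
qed

text \<open>Conservation of charge: \<open>\<langle>z, v c\<rangle>' = - I\<^sub>\<alpha>(c, \<Phi>(c, \<alpha>)) = 0\<close>, so the
  electroneutrality constraint \<open>Q = 0\<close> persists along reduced solutions.\<close>

lemma reduced_solution_electroneutral:
  assumes u: "reduced_solution h u" and Q0: "Qf z zA A (fst (u 0)) (snd (u 0)) = 0" and h: "0 \<le> h"
  shows "\<forall>t\<in>{0..h}. Qf z zA A (fst (u t)) (snd (u t)) = 0"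
proof -
  define H where "H = (\<lambda>t. z \<bullet> (snd (u t) *\<^sub>R fst (u t)))"
  have "(H has_derivative (\<lambda>x. 0)) (at t within {0..h})" if t: "t \<in> {0..h}" for t
  proof -
    have "norm (fst (u t) - ce) < K" using u t unfolding reduced_solution_def reduced_domain_def by blast
    then have "I_alpha z ce j p \<alpha> (fst (u t)) (\<Phi> (fst (u t), \<alpha>)) = 0" using \<Phi>_solves \<alpha>_small by blast
    then have "z \<bullet> (- j (\<Phi> (fst (u t), \<alpha>)) (mu z ce (fst (u t)) (\<Phi> (fst (u t), \<alpha>)))
            - \<alpha> *\<^sub>R p (\<Phi> (fst (u t), \<alpha>)) (fst (u t))) = 0"
      unfolding I_alpha_def by (simp add: inner_diff_right inner_add_right)
    moreover have "(H has_vector_derivative z \<bullet> (- j (\<Phi> (fst (u t), \<alpha>)) (mu z ce (fst (u t)) (\<Phi> (fst (u t), \<alpha>)))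
            - \<alpha> *\<^sub>R p (\<Phi> (fst (u t), \<alpha>)) (fst (u t)))) (at t within {0..h})"
      unfolding H_def
      by (rule bounded_linear.has_vector_derivative[OF bounded_linear_inner_right
            reduced_solution_product_derivative[OF u t]])
    ultimately show ?thesis unfolding has_vector_derivative_def by simp
  qed
  then obtain C where C: "\<forall>t\<in>{0..h}. H t = C"
    using has_derivative_zero_constant[OF convex_real_interval(5)] by blast
  have v_pos: "0 < snd (u t)" if "t \<in> {0..h}" for t
    using u that unfolding reduced_solution_def reduced_domain_def by blast
  have "H 0 = - zA * A"
    using Q0 v_pos[of 0] h unfolding H_def Qf_inner by (simp add: field_simps)
  then have H_const: "H t = - zA * A" if "t \<in> {0..h}" for t using C that h by force
  show ?thesis
  proof
    fix t assume t: "t \<in> {0..h}"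
    show "Qf z zA A (fst (u t)) (snd (u t)) = 0"
      using H_const[OF t] v_pos[OF t] unfolding H_def Qf_inner by (simp add: field_simps)
  qed
qed

text \<open>Existence: a reduced solution starting on the surface, completed by \<open>\<phi> = \<Phi>(c, \<alpha>)\<close>,
  solves the pump-leak system (the constraint \<open>Q = 0\<close> holds by charge conservation).\<close>

lemma reduced_solution_is_pl_solution:
  assumes h: "0 < h" and u: "reduced_solution h u" and u_cont: "continuous_on {0..h} u"
    and init: "u 0 = (c0, v0)" "Qf z zA A c0 v0 = 0"
  shows "pl_solution z ce A zA j p jw \<alpha> (c0, v0, \<Phi> (c0, \<alpha>)) h
           (\<lambda>t. fst (u t)) (\<lambda>t. snd (u t)) (\<lambda>t. \<Phi> (fst (u t), \<alpha>))"
proof -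
  have sub: "{0..<h} \<subseteq> {0..h}" by auto
  have in_dom: "u t \<in> reduced_domain" and du: "(u has_vector_derivative reduced_field (u t)) (at t within {0..h})"
    if "t \<in> {0..h}" for t using u that unfolding reduced_solution_def by auto
  have field_cont: "continuous_on {0..h} (\<lambda>t. reduced_field (u t))"
    using continuous_on_compose2[OF C1_continuous_on[OF reduced_field_C1] u_cont] in_dom by blast
  have dc: "((\<lambda>t. fst (u t)) has_vector_derivative fst (reduced_field (u t))) (at t within {0..<h})"
    and dv: "((\<lambda>t. snd (u t)) has_vector_derivative snd (reduced_field (u t))) (at t within {0..<h})"
    if "t \<in> {0..<h}" for t
    using has_vector_derivative_within_subset[OF bounded_linear.has_vector_derivative[OF bounded_linear_fst du] sub]
      has_vector_derivative_within_subset[OF bounded_linear.has_vector_derivative[OF bounded_linear_snd du] sub] that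
    by auto
  have v_field: "snd (reduced_field y) = - jw (pi_w ce A (fst y) (snd y))" for y
    by (simp add: reduced_field_def)
  have \<phi>_cont: "continuous_on {0..h} (\<lambda>t. \<Phi> (fst (u t), \<alpha>))"
    using continuous_on_compose2[OF reduced_potential_continuous u_cont] in_dom by blast
  have Q: "Qf z zA A (fst (u t)) (snd (u t)) = 0" if "t \<in> {0..h}" for t
    using reduced_solution_electroneutral[OF u] init h that by simp
  have pos: "pos_vec (fst (u t)) \<and> 0 < snd (u t)" if "t \<in> {0..h}" for t
    using in_dom[OF that] near_pos unfolding reduced_domain_def by blast
  show ?thesis
    unfolding pl_solution_def
  proof (intro conjI ballI)
    show "0 < h" by fact
    show "\<exists>c'. continuous_on {0..<h} c' \<and>
            (\<forall>t\<in>{0..<h}. ((\<lambda>t. fst (u t)) has_vector_derivative c' t) (at t within {0..<h}))"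
      using dc continuous_on_subset[OF field_cont sub]
      by (intro exI[of _ "\<lambda>t. fst (reduced_field (u t))"]) (auto intro: continuous_intros)
    show "\<exists>v'. continuous_on {0..<h} v' \<and>
            (\<forall>t\<in>{0..<h}. ((\<lambda>t. snd (u t)) has_vector_derivative v' t) (at t within {0..<h}))"
      using dv continuous_on_subset[OF field_cont sub]
      by (intro exI[of _ "\<lambda>t. snd (reduced_field (u t))"]) (auto intro: continuous_intros)
    show "continuous_on {0..<h} (\<lambda>t. \<Phi> (fst (u t), \<alpha>))" using \<phi>_cont sub by (rule continuous_on_subset)
    show "(fst (u 0), snd (u 0), \<Phi> (fst (u 0), \<alpha>)) = (c0, v0, \<Phi> (c0, \<alpha>))" using init by simp
    fix t assume t: "t \<in> {0..<h}"
    then have t': "t \<in> {0..h}" by auto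
    show "pos_vec (fst (u t))" "0 < snd (u t)" using pos[OF t'] by auto
    show "Qf z zA A (fst (u t)) (snd (u t)) = 0" using Q[OF t'] .
    show "((\<lambda>t. snd (u t)) has_vector_derivative - jw (pi_w ce A (fst (u t)) (snd (u t)))) (at t within {0..<h})"
      using dv[OF t] by (simp add: v_field)
    show "((\<lambda>s. snd (u s) *\<^sub>R fst (u s)) has_vector_derivative
           - j (\<Phi> (fst (u t), \<alpha>)) (mu z ce (fst (u t)) (\<Phi> (fst (u t), \<alpha>)))
           - \<alpha> *\<^sub>R p (\<Phi> (fst (u t), \<alpha>)) (fst (u t))) (at t within {0..<h})"
      using has_vector_derivative_within_subset[OF reduced_solution_product_derivative[OF u t'] sub] .
  qed
qed

text \<open>The
  constraint \<open>I\<^sub>\<alpha> = 0\<close> is recovered by differentiating \<open>Q = 0\<close>.\<close>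

lemma pl_solution_reduces:
  assumes sol: "pl_solution z ce A zA j p jw \<alpha> y0 T c v \<phi>"
    and t: "t \<in> {0..<T}" and in_dom: "(c t, v t) \<in> reduced_domain" and \<phi>_small: "\<bar>\<phi> t\<bar> < K"
  shows "\<phi> t = \<Phi> (c t, \<alpha>) \<and>
         ((\<lambda>t. (c t, v t)) has_vector_derivative reduced_field (c t, v t)) (at t within {0..<T})"
proof -
  obtain c' where dc: "\<forall>t\<in>{0..<T}. (c has_vector_derivative c' t) (at t within {0..<T})"
    using sol unfolding pl_solution_def by blast
  have S: "\<forall>t\<in>{0..<T}. 0 < v t \<and>
        ((\<lambda>s. v s *\<^sub>R c s) has_vector_derivative
            (- j (\<phi> t) (mu z ce (c t) (\<phi> t)) - \<alpha> *\<^sub>R p (\<phi> t) (c t))) (at t within {0..<T}) \<and>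
        Qf z zA A (c t) (v t) = 0 \<and>
        (v has_vector_derivative (- jw (pi_w ce A (c t) (v t)))) (at t within {0..<T})"
    using sol unfolding pl_solution_def by blast
  let ?J = "j (\<phi> t) (mu z ce (c t) (\<phi> t))" and ?P = "\<alpha> *\<^sub>R p (\<phi> t) (c t)"
    and ?W = "jw (pi_w ce A (c t) (v t))"
  \<comment> \<open>\<open>\<langle>z, v c\<rangle> = - z A\<close> is constant, so its derivative \<open>- I\<^sub>\<alpha>(c, \<phi>)\<close> vanishes.\<close>
  define H where "H = (\<lambda>s. z \<bullet> (v s *\<^sub>R c s))"
  have H_const: "H s = - zA * A" if "s \<in> {0..<T}" for s
  proof -
    have "0 < v s" "Qf z zA A (c s) (v s) = 0" using S that by auto
    then show ?thesis unfolding H_def Qf_inner by (simp add: field_simps)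
  qed
  have dH: "(H has_vector_derivative z \<bullet> (- ?J - ?P)) (at t within {0..<T})"
    unfolding H_def using bounded_linear.has_vector_derivative[OF bounded_linear_inner_right] S t by blast
  have "(H has_vector_derivative 0) (at t within {0..<T})"
    by (rule has_vector_derivative_transform[OF t H_const has_vector_derivative_const])
  then have "z \<bullet> (- ?J - ?P) = 0" using has_vector_derivative_unique_Ico[OF _ _ dH] t by auto
  then have "I_alpha z ce j p \<alpha> (c t) (\<phi> t) = 0"
    unfolding I_alpha_def by (simp add: inner_diff_right inner_add_right)
  then have \<phi>_eq: "\<phi> t = \<Phi> (c t, \<alpha>)"
    using \<Phi>_unique \<alpha>_small in_dom \<phi>_small unfolding reduced_domain_def by auto
  \<comment> \<open>Solving \<open>v c' + v' c = - j - \<alpha> p\<close> for \<open>c'\<close> gives the reduced field.\<close>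
  have prod: "((\<lambda>s. v s *\<^sub>R c s) has_vector_derivative (v t *\<^sub>R c' t + (- ?W) *\<^sub>R c t)) (at t within {0..<T})"
    using bounded_bilinear.has_vector_derivative[OF bounded_bilinear_scaleR] S dc t by blast
  have "v t *\<^sub>R c' t + (- ?W) *\<^sub>R c t = - ?J - ?P"
    using has_vector_derivative_unique_Ico[OF _ _ prod] S t by auto
  then have eq: "v t *\<^sub>R c' t = ?W *\<^sub>R c t - ?J - ?P" by (simp add: algebra_simps)
  have "0 < v t" using S t by blast
  then have "c' t = inverse (v t) *\<^sub>R (v t *\<^sub>R c' t)" by simp
  also have "\<dots> = inverse (v t) *\<^sub>R (?W *\<^sub>R c t - ?J - ?P)" by (simp only: eq)
  finally have "(c' t, - ?W) = reduced_field (c t, v t)"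
    unfolding reduced_field_def using \<phi>_eq by simp
  moreover have "((\<lambda>t. (c t, v t)) has_vector_derivative (c' t, - ?W)) (at t within {0..<T})"
    using has_vector_derivative_Pair[of c "c' t" t "{0..<T}" v "- ?W"] dc S t by blast
  ultimately show ?thesis using \<phi>_eq by simp
qed

lemma slice_well_posed:
  assumes y0: "y0 \<in> M"
  shows "\<exists>T c v \<phi>. pl_solution z ce A zA j p jw \<alpha> y0 T c v \<phi> \<and>
                   (\<forall>t\<in>{0..<T}. \<phi> t = \<Phi> (c t, \<alpha>)) \<and>
                   (\<forall>T' c' v' \<phi>'. pl_solution z ce A zA j p jw \<alpha> y0 T' c' v' \<phi>' \<longrightarrow>
                      (\<forall>t\<in>{0..<min T T'}. c' t = c t \<and> v' t = v t \<and> \<phi>' t = \<phi> t))"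
proof -
  obtain c0 v0 \<phi>0 where y0_eq: "y0 = (c0, v0, \<phi>0)" by (cases y0) auto
  with y0 have \<phi>0: "\<phi>0 = \<Phi> (c0, \<alpha>)" and Q0: "Qf z zA A c0 v0 = 0"
    and y0_dom: "(c0, v0) \<in> reduced_domain"
    unfolding slice_eq reduced_domain_def by auto
  obtain h u where h: "h > 0" and u0: "u 0 = (c0, v0)" and u_cont: "continuous_on {0..h} u"
    and u: "\<forall>t\<in>{0..h}. u t \<in> reduced_domain \<and> (u has_vector_derivative reduced_field (u t)) (at t within {0..h})"
    by (rule ode_local_existence[OF reduced_domain_open reduced_field_C1 y0_dom])
  have sol: "pl_solution z ce A zA j p jw \<alpha> y0 h (\<lambda>t. fst (u t)) (\<lambda>t. snd (u t)) (\<lambda>t. \<Phi> (fst (u t), \<alpha>))"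
    unfolding y0_eq \<phi>0
    by (rule reduced_solution_is_pl_solution[OF h _ u_cont u0 Q0]) (use u in \<open>simp add: reduced_solution_def\<close>)
  \<comment> \<open>Uniqueness: every solution reduces to the same ODE while it stays near the surface.\<close>
  have "\<forall>t\<in>{0..<min h T'}. c' t = fst (u t) \<and> v' t = snd (u t) \<and> \<phi>' t = \<Phi> (fst (u t), \<alpha>)"
    if sol': "pl_solution z ce A zA j p jw \<alpha> y0 T' c' v' \<phi>'" for T' c' v' \<phi>'
  proof -
    obtain c'' where "\<forall>t\<in>{0..<T'}. (c' has_vector_derivative c'' t) (at t within {0..<T'})"
      and "\<forall>t\<in>{0..<T'}. (v' has_vector_derivative - jw (pi_w ce A (c' t) (v' t))) (at t within {0..<T'})"
      and \<phi>'_cont: "continuous_on {0..<T'} \<phi>'" and init': "(c' 0, v' 0, \<phi>' 0) = y0"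
      using sol' unfolding pl_solution_def by blast
    then have "continuous_on {0..<T'} c'" "continuous_on {0..<T'} v'"
      unfolding continuous_on_eq_continuous_within by (meson has_vector_derivative_continuous)+
    then have y2_cont: "continuous_on {0..<T'} (\<lambda>t. (c' t, v' t))" by (intro continuous_intros)
    have y2: "\<forall>t\<in>{0..<T'}. (c' t, v' t) \<in> reduced_domain \<and> \<bar>\<phi>' t\<bar> < K \<longrightarrow>
               \<phi>' t = \<Phi> (fst (c' t, v' t), \<alpha>) \<and>
               ((\<lambda>t. (c' t, v' t)) has_vector_derivative reduced_field (c' t, v' t)) (at t within {0..<T'})"
      using pl_solution_reduces[OF sol'] by simp
    have GK: "\<forall>y\<in>reduced_domain. \<bar>\<Phi> (fst y, \<alpha>)\<bar> < K" unfolding reduced_domain_def by simp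
    have i1: "(c' 0, v' 0) = u 0" and i2: "\<phi>' 0 = \<Phi> (fst (u 0), \<alpha>)"
      using init' u0 y0_eq \<phi>0 by simp_all
    have "\<forall>t\<in>{0..<min h T'}. (c' t, v' t) = u t \<and> \<phi>' t = \<Phi> (fst (u t), \<alpha>)"
      by (rule constrained_ode_uniqueness[OF reduced_domain_open reduced_field_C1
            reduced_potential_continuous GK u y2_cont \<phi>'_cont y2 i1 i2])
    then show ?thesis by (metis fst_conv snd_conv)
  qed
  then show ?thesis using sol by blast
qed

end

theorem proposition11:
  fixes z ce :: "real^'n" and A zA :: real
    and j p :: "real \<Rightarrow> real^'n \<Rightarrow> real^'n" and jw :: "real \<Rightarrow> real"
  assumes "CARD('n) \<ge> 2"
    and "z \<noteq> 0"
    and "\<forall>k. 0 < ce $ k"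
    and "(\<Sum>k\<in>UNIV. z $ k * ce $ k) = 0"
    and "0 < A"
    and "C1_on UNIV (\<lambda>(\<phi>, \<mu>). j \<phi> \<mu>)"
    and "C1_on {(\<phi>, c). pos_vec c} (\<lambda>(\<phi>, c). p \<phi> c)"
    and "C1_on UNIV jw"
    and "\<forall>\<phi>. j \<phi> 0 = 0"
    and "\<forall>\<phi>. transpose (matrix (frechet_derivative (j \<phi>) (at 0))) = matrix (frechet_derivative (j \<phi>) (at 0))
             \<and> (\<forall>x. x \<noteq> 0 \<longrightarrow> 0 < x \<bullet> (matrix (frechet_derivative (j \<phi>) (at 0)) *v x))"
  shows "\<exists>K\<^sub>\<alpha>>0. \<exists>K>0. \<exists>\<Phi> :: (real^'n) \<times> real \<Rightarrow> real.
           C1_on {(c, \<alpha>). norm (c - ce) < K \<and> \<bar>\<alpha>\<bar> < K\<^sub>\<alpha>} \<Phi> \<and>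
           (\<forall>\<alpha>. \<bar>\<alpha>\<bar> < K\<^sub>\<alpha> \<longrightarrow>
              submanifold_dim TYPE(real^'n) (Cyl ce K \<inter> Gamma z ce A zA j p \<alpha>) \<and>
              (\<forall>y \<in> Cyl ce K \<inter> Gamma z ce A zA j p \<alpha>. snd (snd y) = \<Phi> (fst y, \<alpha>)) \<and>
              (\<forall>y0 \<in> Cyl ce K \<inter> Gamma z ce A zA j p \<alpha>.
                 \<exists>T c v \<phi>. pl_solution z ce A zA j p jw \<alpha> y0 T c v \<phi> \<and>
                   (\<forall>t\<in>{0..<T}. \<phi> t = \<Phi> (c t, \<alpha>)) \<and>
                   (\<forall>T' c' v' \<phi>'. pl_solution z ce A zA j p jw \<alpha> y0 T' c' v' \<phi>' \<longrightarrow>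
                      (\<forall>t\<in>{0..<min T T'}. c' t = c t \<and> v' t = v t \<and> \<phi>' t = \<phi> t))))"
proof -
  interpret pump_leak z ce j p
    using assms(2,3,6,7,9,10) by unfold_locales blast+
  obtain K K\<alpha> \<Phi> where K: "0 < K" "0 < K\<alpha>"
    and \<Phi>: "C1 {(c, \<alpha>). norm (c - ce) < K \<and> \<bar>\<alpha>\<bar> < K\<alpha>} \<Phi>"
    and solves: "\<forall>c \<alpha>. norm (c - ce) < K \<and> \<bar>\<alpha>\<bar> < K\<alpha> \<longrightarrow> I_alpha z ce j p \<alpha> c (\<Phi> (c, \<alpha>)) = 0"
    and unique: "\<forall>c \<alpha> \<phi>. norm (c - ce) < K \<and> \<bar>\<alpha>\<bar> < K\<alpha> \<and> \<bar>\<phi>\<bar> < K \<and> I_alpha z ce j p \<alpha> c \<phi> = 0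
                   \<longrightarrow> \<phi> = \<Phi> (c, \<alpha>)"
    and near_pos: "\<forall>c. norm (c - ce) < K \<longrightarrow> pos_vec c"
    by (rule current_zero_set_is_graph)
  have slice: "pump_leak_slice z ce j p A jw K K\<alpha> \<Phi> \<alpha>" if "\<bar>\<alpha>\<bar> < K\<alpha>" for \<alpha>
    unfolding pump_leak_slice_def pump_leak_slice_axioms_def
    using pump_leak_axioms assms(5,8) \<Phi> solves unique near_pos that by blast
  have slice_facts: "submanifold_dim TYPE(real^'n) (Cyl ce K \<inter> Gamma z ce A zA j p \<alpha>) \<and>
      (\<forall>y \<in> Cyl ce K \<inter> Gamma z ce A zA j p \<alpha>. snd (snd y) = \<Phi> (fst y, \<alpha>)) \<and>
      (\<forall>y0 \<in> Cyl ce K \<inter> Gamma z ce A zA j p \<alpha>.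
         \<exists>T c v \<phi>. pl_solution z ce A zA j p jw \<alpha> y0 T c v \<phi> \<and> (\<forall>t\<in>{0..<T}. \<phi> t = \<Phi> (c t, \<alpha>)) \<and>
           (\<forall>T' c' v' \<phi>'. pl_solution z ce A zA j p jw \<alpha> y0 T' c' v' \<phi>' \<longrightarrow>
              (\<forall>t\<in>{0..<min T T'}. c' t = c t \<and> v' t = v t \<and> \<phi>' t = \<phi> t)))"
    if "\<bar>\<alpha>\<bar> < K\<alpha>" for \<alpha>
  proof -
    interpret pump_leak_slice z ce j p A zA jw K K\<alpha> \<Phi> \<alpha> by (rule slice[OF that])
    show ?thesis using slice_submanifold slice_well_posed unfolding slice_eq by auto
  qed
  then show ?thesis using K C1_imp_C1_on[OF \<Phi>] by blast
qed

end
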